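(* Let $(A,\mathcal N,\mathcal P,\lambda)$ be a game and $(\sigma,\phi)$ a uniform strategy on it such that uniformity is local: for all $x\in\mathrm{Conf}(\sigma)$ and $\alpha\in\mathcal N$, if $\alpha$ fixes $p_\sigma(x)$ then $\phi_\alpha$ fixes $x$. Then $(\sigma,\mathcal S_\phi(\sigma))$, with projection $p_\sigma$, is a $\sim$-strategy on the thin concurrent game $(A,\mathcal S,\mathcal S_+,\mathcal S_-)$, where $\mathcal S_-=\mathcal S_{\mathcal N}(A)$, $\mathcal S_+=\mathcal S_{\mathcal P}(A)$ and $\mathcal S$ is the closure of $\mathcal S_-\cup\mathcal S_+$ under composition.
   Context: Event structure: a set with a partial order $\leq$ with finitely many elements below each element, an irreflexive symmetric hereditary conflict $\#$ (if $a\leq a'$, $a\#b$ then $a'\#b$), and polarity into $\{-,+\}$. Configurations: finite down-closed conflict-free subsets, $\mathrm{Conf}(\cdot)$. $x\subseteq^+y$ (resp. $\subseteq^-$): $x\subseteq y$ with $y\setminus x$ all positive (resp. negative). Map of event structures: polarity-preserving function mapping configurations to configurations and injective on each configuration. A function $h$ fixes a set $x$ if $h(a)=a$ for all $a\in x$. Automorphism: bijection preserving and reflecting $\leq,\#$, polarity; negative if whenever it fixes a configuration $x$ and $x\subseteq^+y$ it fixes $y$; positive likewise with $\subseteq^-$. Group actions are homomorphisms into automorphism groups. A game $(A,\mathcal N,\mathcal P,\lambda)$: $\mathcal N$ a group acting on $A$ by negative automorphisms, $\mathcal P$ by positive automorphisms, $\lambda:\mathcal N\times\mathcal P\to\mathcal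 P\times\mathcal N$ with (i) $\lambda(e,\beta)=(\beta,e)$, $\lambda(\alpha,e)=(e,\alpha)$; (ii) if $\lambda(\alpha',\beta)=(\beta_1,\alpha_1)$, $\lambda(\alpha,\beta_1)=(\beta_2,\alpha_2)$ then $\lambda(\alpha\alpha',\beta)=(\beta_2,\alpha_2\alpha_1)$; (iii) if $\lambda(\alpha,\beta)=(\beta_1,\alpha_1)$, $\lambda(\alpha_1,\beta')=(\beta_2,\alpha_2)$ then $\lambda(\alpha,\beta\beta')=(\beta_1\beta_2,\alpha_2)$; (iv) if $\lambda(\alpha,\beta)=(\beta',\alpha')$ then $\alpha(\beta(a))=\beta'(\alpha'(a))$ for all $a$. For a group $G$ acting on $A$, $\mathcal S_G(A)$ is the set of bijections $x\cong g(x)$ ($x\in\mathrm{Conf}(A)$, $g\in G$) obtained by restricting $g$ to $x$. Strategy on $A$: event structure $\sigma$ with map $p_\sigma:\sigma\to A$ such that for every $x\in\mathrm{Conf}(\sigma)$: if $p_\sigma(x)\subseteq^-z$ there is a unique $y\in\mathrm{Conf}(\sigma)$ with $x\subseteq y$, $p_\sigma(y)=z$; if $z\subseteq^+p_\sigma(x)$ there is $y\subseteq x$ in $\mathrm{Conf}(\sigma)$ with $p_\sigma(y)=z$. Weak map $\sigma\to\tau$: a map $f$ with $f[x]\in\mathcal P$ ($x\in\mathrm{Conf}(\sigma)$) such that $f[x](p_\tau(f(s)))=p_\sigma(s)$ for $s\in x$. $\alpha\cdot\sigma$ is $\sigma$ with projection $\alpha\circ p_\sigma$. Uniform strategy: strategy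 $\sigma$ with weak maps $\phi_\alpha:\alpha\cdot\sigma\to\sigma$ ($\alpha\in\mathcal N$) such that for all $x$: $\phi_e(x)=x$, $\phi_e[x]=e$; and for all $\alpha,\alpha'$, with $y=\phi_\alpha(x)$, $(\gamma,\beta)=\lambda(\alpha',\phi_\alpha[x])$: $\phi_{\alpha'\alpha}(x)=\phi_\beta(y)$ and $\phi_{\alpha'\alpha}[x]=\gamma\,\phi_\beta[y]$. $\mathcal S_\phi(\sigma)$ is the set of bijections $x\cong\phi_\alpha(x)$ obtained by restricting $\phi_\alpha$ to $x\in\mathrm{Conf}(\sigma)$, for $\alpha\in\mathcal N$. For bijections $\theta:x\cong y$, $\theta':x'\cong y'$ between configurations: $\theta\subseteq\theta'$ if $x\subseteq x'$ and $\theta'|_x=\theta$; $\theta\subseteq^{\pm}\theta'$ if moreover $x\subseteq^{\pm}x'$. An isomorphism family on $E$: a set of polarity-preserving bijections between configurations, containing identities, closed under composition and inverse, closed under restriction to subconfigurations, and such that each $\theta:x\cong y$ extends to some $\theta'\supseteq\theta$ in the family on any configuration $x'\supseteq x$. An event structure with symmetry is a pair $(E,\mathcal S_E)$; a map of such $(E,\mathcal S_E)\to(F,\mathcal S_F)$ is a map of event structures $f$ such that for every $\theta:x\cong y$ in $\mathcal S_E$ the bijection $f(a)\mapsto f(\theta(a))$, $f(x)\cong f(y)$, lies in $\mathcal S_F$. A thin concurrent game is an event structure with isomorphism families $\mathcal S,\mathcal S_+,\mathcal S_-$, $\mathcal S_\pm\subseteq\mathcal S$, such that $\mathcal S_+\cap\mathcal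 S_-$ consists of identities, $\theta\in\mathcal S_+$ and $\theta\subseteq^+\theta'\in\mathcal S$ imply $\theta'\in\mathcal S_+$, and $\theta\in\mathcal S_-$ and $\theta\subseteq^-\theta'\in\mathcal S$ imply $\theta'\in\mathcal S_-$. A $\sim$-strategy on a thin concurrent game $(A,\mathcal S,\mathcal S_+,\mathcal S_-)$ is an event structure with symmetry $(\sigma,\mathcal S_\sigma)$ with a map of event structures with symmetry $p:(\sigma,\mathcal S_\sigma)\to(A,\mathcal S)$ that is a strategy on $A$ and satisfies: (thinness) if $x\in\mathrm{Conf}(\sigma)$ and $\mathrm{id}_x\subseteq^+\theta\in\mathcal S_\sigma$ then $\theta=\mathrm{id}_{x'}$ for some $x'$; ($\sim$-receptivity) if $x\subseteq^-y$ and $x\subseteq^-z$ in $\mathrm{Conf}(\sigma)$ and there is $\theta:p(y)\cong p(z)$ in $\mathcal S$ with $\mathrm{id}_{p(x)}\subseteq\theta$, then there is $\chi:y\cong z$ in $\mathcal S_\sigma$ with $\mathrm{id}_x\subseteq\chi$ and $p\chi=\theta$, where $p\chi$ denotes the bijection $p(s)\mapsto p(\chi(s))$. *)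

theory Defs
  imports "HOL-Algebra.Group"
begin

text \<open>An event structure is given by its set of events, the causal order,
  the conflict relation and the polarity (True = positive, False = negative).\<close>

record 'a evstr =
  evs :: "'a set"
  leq :: "'a \<Rightarrow> 'a \<Rightarrow> bool"
  cfl :: "'a \<Rightarrow> 'a \<Rightarrow> bool"
  pol :: "'a \<Rightarrow> bool"

definition is_es :: "'a evstr \<Rightarrow> bool" where
  "is_es E \<longleftrightarrow>
     (\<forall>a\<in>evs E. leq E a a)
   \<and> (\<forall>a\<in>evs E. \<forall>b\<in>evs E. leq E a b \<and> leq E b a \<longrightarrow> a = b)
   \<and> (\<forall>a\<in>evs E. \<forall>b\<in>evs E. \<forall>c\<in>evs E. leq E a b \<and> leq E b c \<longrightarrow> leq E a c)
   \<and> (\<forall>a\<in>evs E. finite {b\<in>evs E. leq E b a})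
   \<and> (\<forall>a\<in>evs E. \<not> cfl E a a)
   \<and> (\<forall>a\<in>evs E. \<forall>b\<in>evs E. cfl E a b \<longrightarrow> cfl E b a)
   \<and> (\<forall>a\<in>evs E. \<forall>a'\<in>evs E. \<forall>b\<in>evs E. leq E a a' \<and> cfl E a b \<longrightarrow> cfl E a' b)"

definition conf :: "'a evstr \<Rightarrow> 'a set \<Rightarrow> bool" where
  "conf E x \<longleftrightarrow> x \<subseteq> evs E \<and> finite x
     \<and> (\<forall>a\<in>x. \<forall>b\<in>evs E. leq E b a \<longrightarrow> b \<in> x)
     \<and> (\<forall>a\<in>x. \<forall>b\<in>x. \<not> cfl E a b)"

definition pos_ext :: "'a evstr \<Rightarrow> 'a set \<Rightarrow> 'a set \<Rightarrow> bool" where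
  "pos_ext E x y \<longleftrightarrow> x \<subseteq> y \<and> (\<forall>a\<in>y - x. pol E a)"

definition neg_ext :: "'a evstr \<Rightarrow> 'a set \<Rightarrow> 'a set \<Rightarrow> bool" where
  "neg_ext E x y \<longleftrightarrow> x \<subseteq> y \<and> (\<forall>a\<in>y - x. \<not> pol E a)"

definition es_map :: "'a evstr \<Rightarrow> 'b evstr \<Rightarrow> ('a \<Rightarrow> 'b) \<Rightarrow> bool" where
  "es_map E F f \<longleftrightarrow>
     (\<forall>a\<in>evs E. pol F (f a) = pol E a)
   \<and> (\<forall>x. conf E x \<longrightarrow> conf F (f ` x) \<and> inj_on f x)"

definition fixes_set :: "('a \<Rightarrow> 'a) \<Rightarrow> 'a set \<Rightarrow> bool" where
  "fixes_set h x \<longleftrightarrow> (\<forall>a\<in>x. h a = a)"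

definition automorphism :: "'a evstr \<Rightarrow> ('a \<Rightarrow> 'a) \<Rightarrow> bool" where
  "automorphism A h \<longleftrightarrow> bij_betw h (evs A) (evs A)
     \<and> (\<forall>a\<in>evs A. \<forall>b\<in>evs A. leq A (h a) (h b) \<longleftrightarrow> leq A a b)
     \<and> (\<forall>a\<in>evs A. \<forall>b\<in>evs A. cfl A (h a) (h b) \<longleftrightarrow> cfl A a b)
     \<and> (\<forall>a\<in>evs A. pol A (h a) = pol A a)"

definition neg_automorphism :: "'a evstr \<Rightarrow> ('a \<Rightarrow> 'a) \<Rightarrow> bool" where
  "neg_automorphism A h \<longleftrightarrow> automorphism A h
     \<and> (\<forall>x y. conf A x \<and> conf A y \<and> fixes_set h x \<and> pos_ext A x y \<longrightarrow> fixes_set h y)"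

definition pos_automorphism :: "'a evstr \<Rightarrow> ('a \<Rightarrow> 'a) \<Rightarrow> bool" where
  "pos_automorphism A h \<longleftrightarrow> automorphism A h
     \<and> (\<forall>x y. conf A x \<and> conf A y \<and> fixes_set h x \<and> neg_ext A x y \<longrightarrow> fixes_set h y)"

definition group_action_by ::
  "('a evstr \<Rightarrow> ('a \<Rightarrow> 'a) \<Rightarrow> bool) \<Rightarrow> 'g monoid \<Rightarrow> 'a evstr \<Rightarrow> ('g \<Rightarrow> 'a \<Rightarrow> 'a) \<Rightarrow> bool" where
  "group_action_by Q G A act \<longleftrightarrow> group G
     \<and> (\<forall>g\<in>carrier G. Q A (act g))
     \<and> (\<forall>a\<in>evs A. act \<one>\<^bsub>G\<^esub> a = a)
     \<and> (\<forall>g\<in>carrier G. \<forall>h\<in>carrier G. \<forall>a\<in>evs A. act (g \<otimes>\<^bsub>G\<^esub> h) a = act g (act h a))"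

definition is_game ::
  "'a evstr \<Rightarrow> 'n monoid \<Rightarrow> ('n \<Rightarrow> 'a \<Rightarrow> 'a) \<Rightarrow> 'p monoid \<Rightarrow> ('p \<Rightarrow> 'a \<Rightarrow> 'a)
   \<Rightarrow> ('n \<Rightarrow> 'p \<Rightarrow> 'p \<times> 'n) \<Rightarrow> bool" where
  "is_game A N actN P actP lam \<longleftrightarrow>
     is_es A
   \<and> group_action_by neg_automorphism N A actN
   \<and> group_action_by pos_automorphism P A actP
   \<and> (\<forall>\<alpha>\<in>carrier N. \<forall>\<beta>\<in>carrier P. fst (lam \<alpha> \<beta>) \<in> carrier P \<and> snd (lam \<alpha> \<beta>) \<in> carrier N)
   \<and> (\<forall>\<beta>\<in>carrier P. lam \<one>\<^bsub>N\<^esub> \<beta> = (\<beta>, \<one>\<^bsub>N\<^esub>))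
   \<and> (\<forall>\<alpha>\<in>carrier N. lam \<alpha> \<one>\<^bsub>P\<^esub> = (\<one>\<^bsub>P\<^esub>, \<alpha>))
   \<and> (\<forall>\<alpha>\<in>carrier N. \<forall>\<alpha>'\<in>carrier N. \<forall>\<beta>\<in>carrier P.
        let (\<beta>1, \<alpha>1) = lam \<alpha>' \<beta>; (\<beta>2, \<alpha>2) = lam \<alpha> \<beta>1
        in lam (\<alpha> \<otimes>\<^bsub>N\<^esub> \<alpha>') \<beta> = (\<beta>2, \<alpha>2 \<otimes>\<^bsub>N\<^esub> \<alpha>1))
   \<and> (\<forall>\<alpha>\<in>carrier N. \<forall>\<beta>\<in>carrier P. \<forall>\<beta>'\<in>carrier P.
        let (\<beta>1, \<alpha>1) = lam \<alpha> \<beta>; (\<beta>2, \<alpha>2) = lam \<alpha>1 \<beta>'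
        in lam \<alpha> (\<beta> \<otimes>\<^bsub>P\<^esub> \<beta>') = (\<beta>1 \<otimes>\<^bsub>P\<^esub> \<beta>2, \<alpha>2))
   \<and> (\<forall>\<alpha>\<in>carrier N. \<forall>\<beta>\<in>carrier P. \<forall>a\<in>evs A.
        let (\<beta>', \<alpha>') = lam \<alpha> \<beta> in actN \<alpha> (actP \<beta> a) = actP \<beta>' (actN \<alpha>' a))"

definition graph_on :: "('a \<Rightarrow> 'b) \<Rightarrow> 'a set \<Rightarrow> ('a \<times> 'b) set" where
  "graph_on f x = {(a, f a) | a. a \<in> x}"

definition pbij :: "'a evstr \<Rightarrow> ('a \<times> 'a) set \<Rightarrow> bool" where
  "pbij E \<theta> \<longleftrightarrow> conf E (Domain \<theta>) \<and> conf E (Range \<theta>)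
     \<and> single_valued \<theta> \<and> single_valued (converse \<theta>)
     \<and> (\<forall>(a, b)\<in>\<theta>. pol E a = pol E b)"

definition bsub :: "('a \<times> 'b) set \<Rightarrow> ('a \<times> 'b) set \<Rightarrow> bool" where
  "bsub \<theta> \<theta>' \<longleftrightarrow> Domain \<theta> \<subseteq> Domain \<theta>' \<and> \<theta>' \<inter> (Domain \<theta> \<times> UNIV) = \<theta>"

definition bsub_pos :: "'a evstr \<Rightarrow> ('a \<times> 'b) set \<Rightarrow> ('a \<times> 'b) set \<Rightarrow> bool" where
  "bsub_pos E \<theta> \<theta>' \<longleftrightarrow> bsub \<theta> \<theta>' \<and> pos_ext E (Domain \<theta>) (Domain \<theta>')"

definition bsub_neg :: "'a evstr \<Rightarrow> ('a \<times> 'b) set \<Rightarrow> ('a \<times> 'b) set \<Rightarrow> bool" where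
  "bsub_neg E \<theta> \<theta>' \<longleftrightarrow> bsub \<theta> \<theta>' \<and> neg_ext E (Domain \<theta>) (Domain \<theta>')"

definition iso_family :: "'a evstr \<Rightarrow> ('a \<times> 'a) set set \<Rightarrow> bool" where
  "iso_family E S \<longleftrightarrow>
     (\<forall>\<theta>\<in>S. pbij E \<theta>)
   \<and> (\<forall>x. conf E x \<longrightarrow> Id_on x \<in> S)
   \<and> (\<forall>\<theta>\<in>S. \<forall>\<theta>'\<in>S. Range \<theta> = Domain \<theta>' \<longrightarrow> \<theta> O \<theta>' \<in> S)
   \<and> (\<forall>\<theta>\<in>S. converse \<theta> \<in> S)
   \<and> (\<forall>\<theta>\<in>S. \<forall>x'. conf E x' \<and> x' \<subseteq> Domain \<theta> \<longrightarrow> \<theta> \<inter> (x' \<times> UNIV) \<in> S)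
   \<and> (\<forall>\<theta>\<in>S. \<forall>x'. conf E x' \<and> Domain \<theta> \<subseteq> x' \<longrightarrow>
        (\<exists>\<theta>'\<in>S. Domain \<theta>' = x' \<and> bsub \<theta> \<theta>'))"

definition es_sym_map ::
  "'a evstr \<Rightarrow> ('a \<times> 'a) set set \<Rightarrow> 'b evstr \<Rightarrow> ('b \<times> 'b) set set \<Rightarrow> ('a \<Rightarrow> 'b) \<Rightarrow> bool" where
  "es_sym_map E SE F SF f \<longleftrightarrow> es_map E F f \<and> (\<forall>\<theta>\<in>SE. map_prod f f ` \<theta> \<in> SF)"

definition thin_cg ::
  "'a evstr \<Rightarrow> ('a \<times> 'a) set set \<Rightarrow> ('a \<times> 'a) set set \<Rightarrow> ('a \<times> 'a) set set \<Rightarrow> bool" where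
  "thin_cg A S Sp Sm \<longleftrightarrow> is_es A
     \<and> iso_family A S \<and> iso_family A Sp \<and> iso_family A Sm
     \<and> Sp \<subseteq> S \<and> Sm \<subseteq> S
     \<and> (\<forall>\<theta>\<in>Sp \<inter> Sm. \<theta> = Id_on (Domain \<theta>))
     \<and> (\<forall>\<theta>\<in>Sp. \<forall>\<theta>'\<in>S. bsub_pos A \<theta> \<theta>' \<longrightarrow> \<theta>' \<in> Sp)
     \<and> (\<forall>\<theta>\<in>Sm. \<forall>\<theta>'\<in>S. bsub_neg A \<theta> \<theta>' \<longrightarrow> \<theta>' \<in> Sm)"

definition S_act :: "'a evstr \<Rightarrow> 'g monoid \<Rightarrow> ('g \<Rightarrow> 'a \<Rightarrow> 'a) \<Rightarrow> ('a \<times> 'a) set set" where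
  "S_act A G act = {graph_on (act g) x | x g. conf A x \<and> g \<in> carrier G}"

inductive_set comp_closure :: "('a \<times> 'a) set set \<Rightarrow> ('a \<times> 'a) set set" for B where
  base: "\<theta> \<in> B \<Longrightarrow> \<theta> \<in> comp_closure B"
| comp: "\<theta> \<in> comp_closure B \<Longrightarrow> \<theta>' \<in> comp_closure B \<Longrightarrow> Range \<theta> = Domain \<theta>'
          \<Longrightarrow> \<theta> O \<theta>' \<in> comp_closure B"

definition is_strategy :: "'s evstr \<Rightarrow> 'a evstr \<Rightarrow> ('s \<Rightarrow> 'a) \<Rightarrow> bool" where
  "is_strategy \<sigma> A p \<longleftrightarrow> is_es \<sigma> \<and> es_map \<sigma> A p
   \<and> (\<forall>x z. conf \<sigma> x \<and> conf A z \<and> neg_ext A (p ` x) z \<longrightarrow>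
        (\<exists>!y. conf \<sigma> y \<and> x \<subseteq> y \<and> p ` y = z))
   \<and> (\<forall>x z. conf \<sigma> x \<and> conf A z \<and> pos_ext A z (p ` x) \<longrightarrow>
        (\<exists>y. conf \<sigma> y \<and> y \<subseteq> x \<and> p ` y = z))"

text \<open>Uniform strategy: \<open>\<phi> \<alpha>\<close> is the weak map $\phi_\alpha$ and \<open>\<phi>b \<alpha> x\<close> is
  $\phi_\alpha[x] \in \mathcal P$.\<close>
definition uniform_strategy ::
  "'a evstr \<Rightarrow> 'n monoid \<Rightarrow> ('n \<Rightarrow> 'a \<Rightarrow> 'a) \<Rightarrow> 'p monoid \<Rightarrow> ('p \<Rightarrow> 'a \<Rightarrow> 'a)
   \<Rightarrow> ('n \<Rightarrow> 'p \<Rightarrow> 'p \<times> 'n) \<Rightarrow> 's evstr \<Rightarrow> ('s \<Rightarrow> 'a)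
   \<Rightarrow> ('n \<Rightarrow> 's \<Rightarrow> 's) \<Rightarrow> ('n \<Rightarrow> 's set \<Rightarrow> 'p) \<Rightarrow> bool" where
  "uniform_strategy A N actN P actP lam \<sigma> p \<phi> \<phi>b \<longleftrightarrow>
     is_strategy \<sigma> A p
   \<and> (\<forall>\<alpha>\<in>carrier N. es_map \<sigma> \<sigma> (\<phi> \<alpha>)
        \<and> (\<forall>x. conf \<sigma> x \<longrightarrow> \<phi>b \<alpha> x \<in> carrier P
             \<and> (\<forall>s\<in>x. actP (\<phi>b \<alpha> x) (p (\<phi> \<alpha> s)) = actN \<alpha> (p s))))
   \<and> (\<forall>x. conf \<sigma> x \<longrightarrow> \<phi> \<one>\<^bsub>N\<^esub> ` x = x \<and> \<phi>b \<one>\<^bsub>N\<^esub> x = \<one>\<^bsub>P\<^esub>)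
   \<and> (\<forall>x. conf \<sigma> x \<longrightarrow> (\<forall>\<alpha>\<in>carrier N. \<forall>\<alpha>'\<in>carrier N.
        let y = \<phi> \<alpha> ` x; (\<gamma>, \<beta>) = lam \<alpha>' (\<phi>b \<alpha> x)
        in \<phi> (\<alpha>' \<otimes>\<^bsub>N\<^esub> \<alpha>) ` x = \<phi> \<beta> ` y
         \<and> \<phi>b (\<alpha>' \<otimes>\<^bsub>N\<^esub> \<alpha>) x = \<gamma> \<otimes>\<^bsub>P\<^esub> \<phi>b \<beta> y))"

definition S_phi :: "'s evstr \<Rightarrow> 'n monoid \<Rightarrow> ('n \<Rightarrow> 's \<Rightarrow> 's) \<Rightarrow> ('s \<times> 's) set set" where
  "S_phi \<sigma> N \<phi> = {graph_on (\<phi> \<alpha>) x | x \<alpha>. conf \<sigma> x \<and> \<alpha> \<in> carrier N}"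

definition sim_strategy ::
  "'a evstr \<Rightarrow> ('a \<times> 'a) set set \<Rightarrow> ('a \<times> 'a) set set \<Rightarrow> ('a \<times> 'a) set set
   \<Rightarrow> 's evstr \<Rightarrow> ('s \<times> 's) set set \<Rightarrow> ('s \<Rightarrow> 'a) \<Rightarrow> bool" where
  "sim_strategy A S Sp Sm \<sigma> S\<sigma> p \<longleftrightarrow>
     thin_cg A S Sp Sm
   \<and> is_es \<sigma> \<and> iso_family \<sigma> S\<sigma>
   \<and> es_sym_map \<sigma> S\<sigma> A S p
   \<and> is_strategy \<sigma> A p
   \<and> (\<forall>x \<theta>. conf \<sigma> x \<and> \<theta> \<in> S\<sigma> \<and> bsub_pos \<sigma> (Id_on x) \<theta> \<longrightarrow> \<theta> = Id_on (Domain \<theta>))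
   \<and> (\<forall>x y z \<theta>. conf \<sigma> x \<and> conf \<sigma> y \<and> conf \<sigma> z \<and> neg_ext \<sigma> x y \<and> neg_ext \<sigma> x z
        \<and> \<theta> \<in> S \<and> Domain \<theta> = p ` y \<and> Range \<theta> = p ` z \<and> bsub (Id_on (p ` x)) \<theta>
        \<longrightarrow> (\<exists>\<chi>\<in>S\<sigma>. Domain \<chi> = y \<and> Range \<chi> = z \<and> bsub (Id_on x) \<chi>
               \<and> map_prod p p ` \<chi> = \<theta>))"

end

theory Submission
  imports Defs
begin

text \<open>
  Two facts control the symmetries of the game. By axiom (iv) of games a negative symmetry
  followed by a positive one can be reordered, so every element of the composition closure
  \<open>S\<close> is the graph of some \<open>\<beta> \<circ> \<alpha>\<close> with \<open>\<alpha> \<in> N\<close>, \<open>\<beta> \<in> P\<close>. And a negative and a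
  positive automorphism that agree on a configuration both fix it: removing a maximal event,
  a positive one is fixed by the negative automorphism and a negative one by the positive
  automorphism. This gives the thin concurrent game; in particular a symmetry of \<open>S\<close> that
  extends an element of \<open>S\<^sub>-\<close> negatively lies in \<open>S\<^sub>-\<close>.

  On the strategy side, uniformity determines \<open>\<phi>\<^sub>\<alpha>\<^sub>'\<^sub>\<alpha>\<close> on \<open>x\<close> only up to its image, but
  \<open>\<phi>\<^sub>\<alpha>\<^sub>'\<^sub>\<alpha>\<close> and \<open>\<phi>\<^sub>\<beta> \<circ> \<phi>\<^sub>\<alpha>\<close> have the same projection and \<open>p\<close> is injective on
  configurations, so \<open>S\<^sub>\<phi>\<close> is closed under composition; locality makes \<open>\<phi>\<^sub>e\<close> the identity,
  so \<open>S\<^sub>\<phi>\<close> is an isomorphism family. The projection of \<open>\<phi>\<^sub>\<alpha>\<close> on \<open>x\<close> is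
  \<open>\<phi>\<^sub>\<alpha>[x]\<^sup>-\<^sup>1 \<circ> \<alpha>\<close>, which lies in \<open>S\<close>. Thinness and \<open>\<sim>\<close>-receptivity of \<open>\<sigma>\<close> are then
  inherited from the game: locality turns "\<open>\<alpha>\<close> fixes \<open>p x\<close>" into "\<open>\<phi>\<^sub>\<alpha>\<close> fixes \<open>x\<close>", and the
  uniqueness clause of receptivity identifies \<open>\<phi>\<^sub>\<alpha> y\<close> with \<open>z\<close>.
\<close>

section \<open>Bijections between configurations\<close>

lemma graph_on_Domain [simp]: "Domain (graph_on f x) = x"
  by (auto simp: graph_on_def)

lemma graph_on_Range [simp]: "Range (graph_on f x) = f ` x"
  by (auto simp: graph_on_def)

lemma mem_graph_on_iff [simp]: "(a, b) \<in> graph_on f x \<longleftrightarrow> a \<in> x \<and> b = f a"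
  by (auto simp: graph_on_def)

lemma graph_on_eq_iff: "graph_on f x = graph_on g y \<longleftrightarrow> x = y \<and> (\<forall>a\<in>x. f a = g a)"
  by (auto simp: graph_on_def)

lemma Id_on_eq_graph_on: "Id_on x = graph_on (\<lambda>a. a) x"
  by (auto simp: graph_on_def)

lemma graph_on_relcomp: "graph_on f x O graph_on g (f ` x) = graph_on (\<lambda>a. g (f a)) x"
  by (auto simp: graph_on_def)

lemma converse_graph_on:
  "(\<And>a. a \<in> x \<Longrightarrow> g (f a) = a) \<Longrightarrow> converse (graph_on f x) = graph_on g (f ` x)"
  by (auto simp: graph_on_def)

lemma graph_on_Int_restrict: "graph_on f x \<inter> (x' \<times> UNIV) = graph_on f (x \<inter> x')"
  by (auto simp: graph_on_def)

lemma map_prod_graph_on: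
  "(\<And>s. s \<in> x \<Longrightarrow> p (f s) = h (p s)) \<Longrightarrow> map_prod p p ` graph_on f x = graph_on h (p ` x)"
  unfolding graph_on_def by (auto simp: image_iff) (metis (mono_tags))

lemma bsub_graph_on_iff:
  "bsub (graph_on f x) (graph_on g x') \<longleftrightarrow> x \<subseteq> x' \<and> (\<forall>a\<in>x. g a = f a)"
  unfolding bsub_def graph_on_Domain graph_on_Int_restrict graph_on_eq_iff by auto

lemma bsub_Id_on_graph_on_iff: "bsub (Id_on x) (graph_on f x') \<longleftrightarrow> x \<subseteq> x' \<and> fixes_set f x"
  unfolding Id_on_eq_graph_on bsub_graph_on_iff fixes_set_def ..

lemma bsub_relcomp:
  assumes "bsub \<theta> \<theta>\<^sub>1" "bsub \<theta>' \<theta>\<^sub>2" "Range \<theta> = Domain \<theta>'" "Range \<theta>\<^sub>1 = Domain \<theta>\<^sub>2"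
  shows "bsub (\<theta> O \<theta>') (\<theta>\<^sub>1 O \<theta>\<^sub>2)"
proof -
  have restr: "\<theta>\<^sub>1 \<inter> (Domain \<theta> \<times> UNIV) = \<theta>" "\<theta>\<^sub>2 \<inter> (Domain \<theta>' \<times> UNIV) = \<theta>'"
    using assms(1,2) unfolding bsub_def by blast+
  have dom: "Domain (\<theta> O \<theta>') = Domain \<theta>" "Domain (\<theta>\<^sub>1 O \<theta>\<^sub>2) = Domain \<theta>\<^sub>1"
    using assms(3,4) by blast+
  have "(\<theta>\<^sub>1 O \<theta>\<^sub>2) \<inter> (Domain \<theta> \<times> UNIV) \<subseteq> \<theta> O \<theta>'"
  proof
    fix q
    assume "q \<in> (\<theta>\<^sub>1 O \<theta>\<^sub>2) \<inter> (Domain \<theta> \<times> UNIV)"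
    then obtain a b c where q: "q = (a, c)" and ab: "(a, b) \<in> \<theta>\<^sub>1" and bc: "(b, c) \<in> \<theta>\<^sub>2"
      and a: "a \<in> Domain \<theta>"
      by blast
    have "(a, b) \<in> \<theta>"
      using restr(1) ab a by blast
    moreover from this have "(b, c) \<in> \<theta>'"
      using restr(2) assms(3) bc by blast
    ultimately show "q \<in> \<theta> O \<theta>'"
      unfolding q ..
  qed
  moreover have "\<theta> O \<theta>' \<subseteq> (\<theta>\<^sub>1 O \<theta>\<^sub>2) \<inter> (Domain \<theta> \<times> UNIV)"
    using restr by blast
  ultimately show ?thesis
    using assms(1) dom unfolding bsub_def by auto
qed

lemma iso_familyD:
  assumes "iso_family E S"
  shows iso_family_pbij: "\<theta> \<in> S \<Longrightarrow> pbij E \<theta>"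
    and iso_family_Id_on: "conf E x \<Longrightarrow> Id_on x \<in> S"
    and iso_family_converse: "\<theta> \<in> S \<Longrightarrow> converse \<theta> \<in> S"
    and iso_family_restrict: "\<theta> \<in> S \<Longrightarrow> conf E x' \<Longrightarrow> x' \<subseteq> Domain \<theta> \<Longrightarrow> \<theta> \<inter> (x' \<times> UNIV) \<in> S"
    and iso_family_extend: "\<theta> \<in> S \<Longrightarrow> conf E x' \<Longrightarrow> Domain \<theta> \<subseteq> x' \<Longrightarrow>
                              \<exists>\<theta>'\<in>S. Domain \<theta>' = x' \<and> bsub \<theta> \<theta>'"
  using assms unfolding iso_family_def by simp_all

lemma pbij_graph_on:
  assumes "conf E x" "conf E (f ` x)" "inj_on f x" "\<forall>a\<in>x. pol E (f a) = pol E a"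
  shows "pbij E (graph_on f x)"
  using assms unfolding pbij_def single_valued_def inj_on_def by auto

lemma pbij_relcomp:
  assumes "pbij E \<theta>" "pbij E \<theta>'" "Range \<theta> = Domain \<theta>'"
  shows "pbij E (\<theta> O \<theta>')"
proof -
  have "Domain (\<theta> O \<theta>') = Domain \<theta>" "Range (\<theta> O \<theta>') = Range \<theta>'"
    using assms(3) by blast+
  with assms show ?thesis
    unfolding pbij_def by (auto simp: single_valued_relcomp converse_relcomp)
qed

lemma comp_closure_pbij:
  assumes "\<And>\<theta>. \<theta> \<in> B \<Longrightarrow> pbij E \<theta>" "\<theta> \<in> comp_closure B"
  shows "pbij E \<theta>"
  using assms(2) by induction (auto intro: assms(1) pbij_relcomp)

lemma comp_closure_converse:
  assumes "\<And>\<theta>. \<theta> \<in> B \<Longrightarrow> converse \<theta> \<in> B" "\<theta> \<in> comp_closure B"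
  shows "converse \<theta> \<in> comp_closure B"
  using assms(2)
proof induction
  case (base \<theta>)
  then show ?case by (simp add: assms(1) comp_closure.base)
next
  case (comp \<theta> \<theta>')
  then show ?case by (simp add: converse_relcomp comp_closure.comp)
qed

lemma comp_closure_restrict:
  assumes pbij: "\<And>\<theta>. \<theta> \<in> B \<Longrightarrow> pbij E \<theta>"
    and restrict: "\<And>\<theta> x'. \<theta> \<in> B \<Longrightarrow> conf E x' \<Longrightarrow> x' \<subseteq> Domain \<theta> \<Longrightarrow> \<theta> \<inter> (x' \<times> UNIV) \<in> B"
    and "\<theta> \<in> comp_closure B" "conf E x'" "x' \<subseteq> Domain \<theta>"
  shows "\<theta> \<inter> (x' \<times> UNIV) \<in> comp_closure B"
  using assms(3-)
proof (induction arbitrary: x')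
  case (base \<theta>)
  then show ?case by (blast intro: comp_closure.base restrict)
next
  case (comp \<theta> \<theta>')
  define \<rho> where "\<rho> = \<theta> \<inter> (x' \<times> UNIV)"
  have \<rho>: "\<rho> \<in> comp_closure B"
    using comp.IH(1) comp.hyps(3) comp.prems unfolding \<rho>_def by blast
  then have "conf E (Range \<rho>)"
    using comp_closure_pbij[OF pbij] unfolding pbij_def by blast
  moreover have "Range \<rho> \<subseteq> Domain \<theta>'"
    using comp.hyps(3) unfolding \<rho>_def by blast
  ultimately have "\<theta>' \<inter> (Range \<rho> \<times> UNIV) \<in> comp_closure B"
    using comp.IH(2) by blast
  moreover have "Range \<rho> = Domain (\<theta>' \<inter> (Range \<rho> \<times> UNIV))"
    using \<open>Range \<rho> \<subseteq> Domain \<theta>'\<close> by blast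
  moreover have "(\<theta> O \<theta>') \<inter> (x' \<times> UNIV) = \<rho> O (\<theta>' \<inter> (Range \<rho> \<times> UNIV))"
    unfolding \<rho>_def by blast
  ultimately show ?case
    using \<rho> by (simp add: comp_closure.comp)
qed

lemma comp_closure_extend:
  assumes pbij: "\<And>\<theta>. \<theta> \<in> B \<Longrightarrow> pbij E \<theta>"
    and extend: "\<And>\<theta> x'. \<theta> \<in> B \<Longrightarrow> conf E x' \<Longrightarrow> Domain \<theta> \<subseteq> x' \<Longrightarrow>
                   \<exists>\<theta>'\<in>B. Domain \<theta>' = x' \<and> bsub \<theta> \<theta>'"
    and "\<theta> \<in> comp_closure B" "conf E x'" "Domain \<theta> \<subseteq> x'"
  shows "\<exists>\<theta>\<^sub>1\<in>comp_closure B. Domain \<theta>\<^sub>1 = x' \<and> bsub \<theta> \<theta>\<^sub>1"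
  using assms(3-)
proof (induction arbitrary: x')
  case (base \<theta>)
  then show ?case by (metis extend comp_closure.base)
next
  case (comp \<theta> \<theta>')
  have "Domain (\<theta> O \<theta>') = Domain \<theta>"
    using comp.hyps(3) by blast
  then obtain \<theta>\<^sub>1 where \<theta>\<^sub>1: "\<theta>\<^sub>1 \<in> comp_closure B" "Domain \<theta>\<^sub>1 = x'" "bsub \<theta> \<theta>\<^sub>1"
    using comp.IH(1)[of x'] comp.prems by blast
  have "conf E (Range \<theta>\<^sub>1)"
    using comp_closure_pbij[OF pbij \<theta>\<^sub>1(1)] unfolding pbij_def by blast
  moreover have "Domain \<theta>' \<subseteq> Range \<theta>\<^sub>1"
    using \<theta>\<^sub>1(3) comp.hyps(3) unfolding bsub_def by blast
  ultimately obtain \<theta>\<^sub>2 where \<theta>\<^sub>2: "\<theta>\<^sub>2 \<in> comp_closure B" "Domain \<theta>\<^sub>2 = Range \<theta>\<^sub>1" "bsub \<theta>' \<theta>\<^sub>2"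
    using comp.IH(2) by blast
  have "\<theta>\<^sub>1 O \<theta>\<^sub>2 \<in> comp_closure B"
    using \<theta>\<^sub>1(1) \<theta>\<^sub>2(1,2) by (simp add: comp_closure.comp)
  moreover have "Domain (\<theta>\<^sub>1 O \<theta>\<^sub>2) = x'"
    using \<theta>\<^sub>1(2) \<theta>\<^sub>2(2) by blast
  ultimately show ?case
    using bsub_relcomp[OF \<theta>\<^sub>1(3) \<theta>\<^sub>2(3) comp.hyps(3)] \<theta>\<^sub>2(2) by auto
qed

lemma iso_family_comp_closure:
  assumes pbij: "\<And>\<theta>. \<theta> \<in> B \<Longrightarrow> pbij E \<theta>"
    and Id_on: "\<And>x. conf E x \<Longrightarrow> Id_on x \<in> B"
    and converse: "\<And>\<theta>. \<theta> \<in> B \<Longrightarrow> converse \<theta> \<in> B"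
    and restrict: "\<And>\<theta> x'. \<theta> \<in> B \<Longrightarrow> conf E x' \<Longrightarrow> x' \<subseteq> Domain \<theta> \<Longrightarrow> \<theta> \<inter> (x' \<times> UNIV) \<in> B"
    and extend: "\<And>\<theta> x'. \<theta> \<in> B \<Longrightarrow> conf E x' \<Longrightarrow> Domain \<theta> \<subseteq> x' \<Longrightarrow>
                   \<exists>\<theta>'\<in>B. Domain \<theta>' = x' \<and> bsub \<theta> \<theta>'"
  shows "iso_family E (comp_closure B)"
  unfolding iso_family_def
proof (intro conjI ballI allI impI)
  show "pbij E \<theta>" if "\<theta> \<in> comp_closure B" for \<theta>
    using pbij that by (rule comp_closure_pbij)
  show "Id_on x \<in> comp_closure B" if "conf E x" for x
    using Id_on[OF that] by (rule comp_closure.base)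
  show "\<theta> O \<theta>' \<in> comp_closure B"
    if "\<theta> \<in> comp_closure B" "\<theta>' \<in> comp_closure B" "Range \<theta> = Domain \<theta>'" for \<theta> \<theta>'
    using that by (rule comp_closure.comp)
  show "converse \<theta> \<in> comp_closure B" if "\<theta> \<in> comp_closure B" for \<theta>
    using converse that by (rule comp_closure_converse)
  show "\<theta> \<inter> (x' \<times> UNIV) \<in> comp_closure B"
    if "\<theta> \<in> comp_closure B" "conf E x' \<and> x' \<subseteq> Domain \<theta>" for \<theta> x'
    using comp_closure_restrict[OF pbij restrict that(1)] that(2) by blast
  show "\<exists>\<theta>'\<in>comp_closure B. Domain \<theta>' = x' \<and> bsub \<theta> \<theta>'"
    if "\<theta> \<in> comp_closure B" "conf E x' \<and> Domain \<theta> \<subseteq> x'" for \<theta> x'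
    using comp_closure_extend[OF pbij extend that(1)] that(2) by blast
qed

lemma iso_family_comp_closure_Un:
  assumes S\<^sub>1: "iso_family E S\<^sub>1" and S\<^sub>2: "iso_family E S\<^sub>2"
  shows "iso_family E (comp_closure (S\<^sub>1 \<union> S\<^sub>2))"
proof (rule iso_family_comp_closure)
  fix \<theta> x'
  assume "\<theta> \<in> S\<^sub>1 \<union> S\<^sub>2" and x': "conf E x'" "Domain \<theta> \<subseteq> x'"
  then consider "\<theta> \<in> S\<^sub>1" | "\<theta> \<in> S\<^sub>2"
    by blast
  then show "\<exists>\<theta>'\<in>S\<^sub>1 \<union> S\<^sub>2. Domain \<theta>' = x' \<and> bsub \<theta> \<theta>'"
  proof cases
    case 1
    show ?thesis
      using iso_family_extend[OF S\<^sub>1 1 x'] by blast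
  next
    case 2
    show ?thesis
      using iso_family_extend[OF S\<^sub>2 2 x'] by blast
  qed
qed (use iso_family_pbij[OF S\<^sub>1] iso_family_pbij[OF S\<^sub>2] iso_family_Id_on[OF S\<^sub>1]
       iso_family_converse[OF S\<^sub>1] iso_family_converse[OF S\<^sub>2]
       iso_family_restrict[OF S\<^sub>1] iso_family_restrict[OF S\<^sub>2] in blast)+

section \<open>Event structures and their automorphisms\<close>

lemma conf_subset_evs: "conf E x \<Longrightarrow> x \<subseteq> evs E"
  by (simp add: conf_def)

lemma conf_finite: "conf E x \<Longrightarrow> finite x"
  by (simp add: conf_def)

lemma conf_remove_maximal:
  assumes E: "is_es E" and x: "conf E x" and "x \<noteq> {}"
  shows "\<exists>e\<in>x. conf E (x - {e})"
proof -
  let ?lt = "\<lambda>a b. leq E a b \<and> a \<noteq> b"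
  have leq_antisym: "\<And>a b. a \<in> x \<Longrightarrow> b \<in> x \<Longrightarrow> leq E a b \<Longrightarrow> leq E b a \<Longrightarrow> a = b"
    and leq_trans: "\<And>a b c. a \<in> x \<Longrightarrow> b \<in> x \<Longrightarrow> c \<in> x \<Longrightarrow> leq E a b \<Longrightarrow> leq E b c \<Longrightarrow> leq E a c"
    using E conf_subset_evs[OF x] unfolding is_es_def by (meson subsetD)+
  have "asymp_on x ?lt"
    by (rule asymp_onI) (use leq_antisym in blast)
  moreover have "transp_on x ?lt"
    by (rule transp_onI) (use leq_antisym leq_trans in blast)
  ultimately obtain e where "e \<in> x" and maximal: "\<forall>b\<in>x. b \<noteq> e \<longrightarrow> \<not> ?lt e b"
    using Finite_Set.bex_max_element[OF conf_finite[OF x]] \<open>x \<noteq> {}\<close> by blast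
  then have "conf E (x - {e})"
    using x unfolding conf_def by blast
  with \<open>e \<in> x\<close> show ?thesis ..
qed

lemma neg_automorphism_fixes_pos_ext:
  "neg_automorphism A f \<Longrightarrow> conf A x \<Longrightarrow> conf A y \<Longrightarrow> fixes_set f x \<Longrightarrow> pos_ext A x y
    \<Longrightarrow> fixes_set f y"
  unfolding neg_automorphism_def by blast

lemma pos_automorphism_fixes_neg_ext:
  "pos_automorphism A f \<Longrightarrow> conf A x \<Longrightarrow> conf A y \<Longrightarrow> fixes_set f x \<Longrightarrow> neg_ext A x y
    \<Longrightarrow> fixes_set f y"
  unfolding pos_automorphism_def by blast

lemma neg_pos_automorphism_agree_fixes:
  assumes A: "is_es A" and f: "neg_automorphism A f" and g: "pos_automorphism A g"
    and x: "conf A x" and agree: "\<forall>a\<in>x. f a = g a"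
  shows "fixes_set f x"
  using conf_finite[OF x] x agree
proof (induction x rule: finite_remove_induct)
  case empty
  then show ?case by (simp add: fixes_set_def)
next
  case (remove x)
  obtain e where "e \<in> x" and conf_rest: "conf A (x - {e})"
    using conf_remove_maximal[OF A remove.prems(1) remove.hyps(2)] by blast
  have f_rest: "fixes_set f (x - {e})"
    using remove.IH[OF \<open>e \<in> x\<close> conf_rest] remove.prems(2) by blast
  show ?case
  proof (cases "pol A e")
    case True
    then have "pos_ext A (x - {e}) x"
      by (auto simp: pos_ext_def)
    then show ?thesis
      using neg_automorphism_fixes_pos_ext[OF f conf_rest remove.prems(1) f_rest] by blast
  next
    case False
    then have "neg_ext A (x - {e}) x"
      using \<open>e \<in> x\<close> by (auto simp: neg_ext_def)
    moreover have "fixes_set g (x - {e})"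
      using f_rest remove.prems(2) by (simp add: fixes_set_def)
    ultimately have "fixes_set g x"
      using pos_automorphism_fixes_neg_ext[OF g conf_rest remove.prems(1)] by blast
    then show ?thesis
      using remove.prems(2) by (simp add: fixes_set_def)
  qed
qed

lemma fixes_set_image_eq: "fixes_set f x \<Longrightarrow> f ` x = x"
  by (simp add: fixes_set_def)

lemma es_map_conf: "es_map E F f \<Longrightarrow> conf E x \<Longrightarrow> conf F (f ` x)"
  by (simp add: es_map_def)

lemma es_map_inj_on: "es_map E F f \<Longrightarrow> conf E x \<Longrightarrow> inj_on f x"
  by (simp add: es_map_def)

lemma es_map_pol: "es_map E F f \<Longrightarrow> a \<in> evs E \<Longrightarrow> pol F (f a) = pol E a"
  by (simp add: es_map_def)

lemma es_map_neg_ext: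
  assumes f: "es_map E F f" and y: "conf E y" and "neg_ext E x y"
  shows "neg_ext F (f ` x) (f ` y)"
  using assms(3) es_map_pol[OF f] conf_subset_evs[OF y] unfolding neg_ext_def by blast

lemma es_map_pos_ext:
  assumes f: "es_map E F f" and y: "conf E y" and "pos_ext E x y"
  shows "pos_ext F (f ` x) (f ` y)"
  using assms(3) es_map_pol[OF f] conf_subset_evs[OF y] unfolding pos_ext_def by blast

lemma automorphism_es_map:
  assumes h: "automorphism A h"
  shows "es_map A A h"
  unfolding es_map_def
proof (intro conjI ballI allI impI)
  have bij: "bij_betw h (evs A) (evs A)"
    and leq: "\<forall>a\<in>evs A. \<forall>b\<in>evs A. leq A (h a) (h b) \<longleftrightarrow> leq A a b"
    and cfl: "\<forall>a\<in>evs A. \<forall>b\<in>evs A. cfl A (h a) (h b) \<longleftrightarrow> cfl A a b"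
    using h unfolding automorphism_def by blast+
  show "pol A (h a) = pol A a" if "a \<in> evs A" for a
    using h that unfolding automorphism_def by blast
  fix x
  assume x: "conf A x"
  show "inj_on h x"
    using bij conf_subset_evs[OF x] by (meson bij_betw_def inj_on_subset)
  show "conf A (h ` x)"
    unfolding conf_def
  proof (intro conjI ballI impI)
    show "h ` x \<subseteq> evs A" "finite (h ` x)"
      using bij conf_subset_evs[OF x] conf_finite[OF x] by (auto simp: bij_betw_def)
    show "\<not> cfl A a b" if "a \<in> h ` x" "b \<in> h ` x" for a b
      using that x cfl conf_subset_evs[OF x] unfolding conf_def by blast
    fix a b
    assume "a \<in> h ` x" "b \<in> evs A" "leq A b a"
    then obtain a' b' where "a' \<in> x" "a = h a'" "b' \<in> evs A" "b = h b'"
      using bij unfolding bij_betw_def by blast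
    then have "b' \<in> x"
      using x leq conf_subset_evs[OF x] \<open>leq A b a\<close> unfolding conf_def by blast
    then show "b \<in> h ` x"
      using \<open>b = h b'\<close> by blast
  qed
qed

section \<open>Group actions by automorphisms\<close>

lemma iso_family_graph_family:
  fixes f :: "'g \<Rightarrow> 'a \<Rightarrow> 'a"
  assumes maps: "\<And>g. g \<in> C \<Longrightarrow> es_map E E (f g)"
    and unit: "g\<^sub>0 \<in> C" "\<And>x a. conf E x \<Longrightarrow> a \<in> x \<Longrightarrow> f g\<^sub>0 a = a"
    and comp: "\<And>g g' x. g \<in> C \<Longrightarrow> g' \<in> C \<Longrightarrow> conf E x \<Longrightarrow>
                 \<exists>h\<in>C. \<forall>a\<in>x. f g' (f g a) = f h a"
    and inverse: "\<And>g x. g \<in> C \<Longrightarrow> conf E x \<Longrightarrow> \<exists>h\<in>C. \<forall>a\<in>x. f h (f g a) = a"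
  shows "iso_family E {graph_on (f g) x | x g. conf E x \<and> g \<in> C}"
    (is "iso_family E ?S")
  unfolding iso_family_def
proof (intro conjI ballI allI impI)
  fix \<theta>
  assume "\<theta> \<in> ?S"
  then obtain x g where \<theta>: "\<theta> = graph_on (f g) x" and x: "conf E x" and g: "g \<in> C"
    by blast
  have fx: "conf E (f g ` x)"
    using es_map_conf[OF maps[OF g] x] .
  show "pbij E \<theta>"
    unfolding \<theta> using x fx es_map_inj_on[OF maps[OF g] x]
    by (rule pbij_graph_on) (use es_map_pol[OF maps[OF g]] conf_subset_evs[OF x] in blast)
  show "converse \<theta> \<in> ?S"
  proof -
    obtain h where "h \<in> C" "\<forall>a\<in>x. f h (f g a) = a"
      using inverse[OF g x] by blast
    then have "converse \<theta> = graph_on (f h) (f g ` x)"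
      unfolding \<theta> by (simp add: converse_graph_on)
    then show ?thesis
      using fx \<open>h \<in> C\<close> by blast
  qed
  show "\<theta> O \<theta>' \<in> ?S" if \<theta>'_in: "\<theta>' \<in> ?S" and range: "Range \<theta> = Domain \<theta>'" for \<theta>'
  proof -
    obtain x' g' where \<theta>': "\<theta>' = graph_on (f g') x'" and g': "g' \<in> C"
      using \<theta>'_in by blast
    have x': "x' = f g ` x"
      using range unfolding \<theta> \<theta>' by simp
    obtain h where "h \<in> C" "\<forall>a\<in>x. f g' (f g a) = f h a"
      using comp[OF g g' x] by blast
    then have "\<theta> O \<theta>' = graph_on (f h) x"
      unfolding \<theta> \<theta>' x' graph_on_relcomp by (simp add: graph_on_eq_iff)
    then show ?thesis
      using x \<open>h \<in> C\<close> by blast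
  qed
  show "\<theta> \<inter> (x' \<times> UNIV) \<in> ?S" if "conf E x' \<and> x' \<subseteq> Domain \<theta>" for x'
  proof -
    have "\<theta> \<inter> (x' \<times> UNIV) = graph_on (f g) x'"
      using that unfolding \<theta> graph_on_Int_restrict by (simp add: Int_absorb1)
    then show ?thesis
      using that g by blast
  qed
  show "\<exists>\<theta>'\<in>?S. Domain \<theta>' = x' \<and> bsub \<theta> \<theta>'" if "conf E x' \<and> Domain \<theta> \<subseteq> x'" for x'
  proof -
    have "graph_on (f g) x' \<in> ?S"
      using that g by blast
    moreover have "bsub \<theta> (graph_on (f g) x')"
      using that unfolding \<theta> bsub_graph_on_iff by simp
    ultimately show ?thesis
      by (intro bexI[of _ "graph_on (f g) x'"]) simp_all
  qed
next
  fix x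
  assume "conf E x"
  then have "Id_on x = graph_on (f g\<^sub>0) x"
    unfolding Id_on_eq_graph_on graph_on_eq_iff using unit(2) by simp
  then show "Id_on x \<in> ?S"
    using \<open>conf E x\<close> unit(1) by blast
qed

locale automorphism_action =
  fixes Q :: "'a evstr \<Rightarrow> ('a \<Rightarrow> 'a) \<Rightarrow> bool" and G :: "'g monoid" and A :: "'a evstr"
    and act :: "'g \<Rightarrow> 'a \<Rightarrow> 'a"
  assumes action: "group_action_by Q G A act"
    and Q_automorphism: "\<And>h. Q A h \<Longrightarrow> automorphism A h"
begin

sublocale group G
  using action by (simp add: group_action_by_def)

lemma Q_act: "g \<in> carrier G \<Longrightarrow> Q A (act g)"
  using action by (simp add: group_action_by_def)

lemma automorphism_act: "g \<in> carrier G \<Longrightarrow> automorphism A (act g)"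
  by (rule Q_automorphism[OF Q_act])

lemma es_map_act: "g \<in> carrier G \<Longrightarrow> es_map A A (act g)"
  by (rule automorphism_es_map[OF automorphism_act])

lemma act_one: "a \<in> evs A \<Longrightarrow> act \<one>\<^bsub>G\<^esub> a = a"
  using action by (simp add: group_action_by_def)

lemma act_mult:
  "g \<in> carrier G \<Longrightarrow> h \<in> carrier G \<Longrightarrow> a \<in> evs A \<Longrightarrow> act (g \<otimes>\<^bsub>G\<^esub> h) a = act g (act h a)"
  using action by (simp add: group_action_by_def)

lemma act_closed: "g \<in> carrier G \<Longrightarrow> a \<in> evs A \<Longrightarrow> act g a \<in> evs A"
  using automorphism_act unfolding automorphism_def bij_betw_def by blast

lemma act_inv_act: "g \<in> carrier G \<Longrightarrow> a \<in> evs A \<Longrightarrow> act (inv\<^bsub>G\<^esub> g) (act g a) = a"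
  by (simp flip: act_mult add: act_one)

lemma act_inject: "g \<in> carrier G \<Longrightarrow> a \<in> evs A \<Longrightarrow> b \<in> evs A \<Longrightarrow> act g a = act g b \<longleftrightarrow> a = b"
  by (metis act_inv_act)

lemma conf_act_image: "g \<in> carrier G \<Longrightarrow> conf A x \<Longrightarrow> conf A (act g ` x)"
  by (rule es_map_conf[OF es_map_act])

lemma iso_family_S_act: "iso_family A (S_act A G act)"
  unfolding S_act_def
proof (rule iso_family_graph_family[where g\<^sub>0 = "\<one>\<^bsub>G\<^esub>"])
  show "es_map A A (act g)" if "g \<in> carrier G" for g
    using that by (rule es_map_act)
  show "act \<one>\<^bsub>G\<^esub> a = a" if "conf A x" "a \<in> x" for x a
    using conf_subset_evs[OF that(1)] that(2) by (simp add: act_one subsetD)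
  show "\<exists>h\<in>carrier G. \<forall>a\<in>x. act g' (act g a) = act h a"
    if "g \<in> carrier G" "g' \<in> carrier G" "conf A x" for g g' x
  proof (intro bexI ballI)
    show "act g' (act g a) = act (g' \<otimes>\<^bsub>G\<^esub> g) a" if "a \<in> x" for a
      using act_mult[OF \<open>g' \<in> carrier G\<close> \<open>g \<in> carrier G\<close>] conf_subset_evs[OF \<open>conf A x\<close>] that
      by auto
  qed (use that in simp)
  show "\<exists>h\<in>carrier G. \<forall>a\<in>x. act h (act g a) = a" if "g \<in> carrier G" "conf A x" for g x
  proof (intro bexI ballI)
    show "act (inv\<^bsub>G\<^esub> g) (act g a) = a" if "a \<in> x" for a
      using act_inv_act[OF \<open>g \<in> carrier G\<close>] conf_subset_evs[OF \<open>conf A x\<close>] that by auto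
  qed (use that in simp)
qed simp

end

section \<open>The thin concurrent game of a game\<close>

locale game =
  fixes A :: "'a evstr" and N :: "'n monoid" and actN :: "'n \<Rightarrow> 'a \<Rightarrow> 'a"
    and P :: "'p monoid" and actP :: "'p \<Rightarrow> 'a \<Rightarrow> 'a" and lam :: "'n \<Rightarrow> 'p \<Rightarrow> 'p \<times> 'n"
  assumes game: "is_game A N actN P actP lam"
begin

sublocale Neg: automorphism_action neg_automorphism N A actN
  using game by unfold_locales (simp_all add: is_game_def neg_automorphism_def)

sublocale Pos: automorphism_action pos_automorphism P A actP
  using game by unfold_locales (simp_all add: is_game_def pos_automorphism_def)

lemma is_es_game: "is_es A"
  using game by (simp add: is_game_def)

lemma lam_closed:
  assumes "\<alpha> \<in> carrier N" "\<beta> \<in> carrier P" "lam \<alpha> \<beta> = (\<beta>', \<alpha>')"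
  shows "\<beta>' \<in> carrier P" "\<alpha>' \<in> carrier N"
  using game assms unfolding is_game_def by (metis fst_conv snd_conv)+

lemma lam_one_right: "\<alpha> \<in> carrier N \<Longrightarrow> lam \<alpha> \<one>\<^bsub>P\<^esub> = (\<one>\<^bsub>P\<^esub>, \<alpha>)"
  using game by (simp add: is_game_def)

lemma lam_mult_right:
  assumes "\<alpha> \<in> carrier N" "\<beta> \<in> carrier P" "\<beta>' \<in> carrier P"
    and "lam \<alpha> \<beta> = (\<beta>\<^sub>1, \<alpha>\<^sub>1)" "lam \<alpha>\<^sub>1 \<beta>' = (\<beta>\<^sub>2, \<alpha>\<^sub>2)"
  shows "lam \<alpha> (\<beta> \<otimes>\<^bsub>P\<^esub> \<beta>') = (\<beta>\<^sub>1 \<otimes>\<^bsub>P\<^esub> \<beta>\<^sub>2, \<alpha>\<^sub>2)"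
proof -
  have "let (\<beta>\<^sub>1, \<alpha>\<^sub>1) = lam \<alpha> \<beta>; (\<beta>\<^sub>2, \<alpha>\<^sub>2) = lam \<alpha>\<^sub>1 \<beta>'
        in lam \<alpha> (\<beta> \<otimes>\<^bsub>P\<^esub> \<beta>') = (\<beta>\<^sub>1 \<otimes>\<^bsub>P\<^esub> \<beta>\<^sub>2, \<alpha>\<^sub>2)"
    using game assms(1-3) unfolding is_game_def by blast
  then show ?thesis
    using assms(4,5) by simp
qed

lemma lam_act_commute:
  assumes "\<alpha> \<in> carrier N" "\<beta> \<in> carrier P" "lam \<alpha> \<beta> = (\<beta>', \<alpha>')" "a \<in> evs A"
  shows "actN \<alpha> (actP \<beta> a) = actP \<beta>' (actN \<alpha>' a)"
proof -
  have "let (\<beta>', \<alpha>') = lam \<alpha> \<beta> in actN \<alpha> (actP \<beta> a) = actP \<beta>' (actN \<alpha>' a)"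
    using game assms(1,2,4) unfolding is_game_def by blast
  then show ?thesis
    using assms(3) by simp
qed

text \<open>The witness is the \<open>N\<close>-component of \<open>\<lambda>(\<alpha>, \<beta>\<^sup>-\<^sup>1)\<close>, by axiom (iii).\<close>
lemma lam_snd_surj:
  assumes \<alpha>: "\<alpha> \<in> carrier N" and \<beta>: "\<beta> \<in> carrier P"
  shows "\<exists>\<alpha>'\<in>carrier N. snd (lam \<alpha>' \<beta>) = \<alpha>"
proof -
  obtain \<beta>\<^sub>1 \<alpha>\<^sub>1 where 1: "lam \<alpha> (inv\<^bsub>P\<^esub> \<beta>) = (\<beta>\<^sub>1, \<alpha>\<^sub>1)"
    by fastforce
  obtain \<beta>\<^sub>2 \<alpha>\<^sub>2 where 2: "lam \<alpha>\<^sub>1 \<beta> = (\<beta>\<^sub>2, \<alpha>\<^sub>2)"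
    by fastforce
  have "(\<beta>\<^sub>1 \<otimes>\<^bsub>P\<^esub> \<beta>\<^sub>2, \<alpha>\<^sub>2) = lam \<alpha> (inv\<^bsub>P\<^esub> \<beta> \<otimes>\<^bsub>P\<^esub> \<beta>)"
    using lam_mult_right[OF \<alpha> _ \<beta> 1 2] \<beta> by simp
  also have "\<dots> = (\<one>\<^bsub>P\<^esub>, \<alpha>)"
    using \<alpha> \<beta> by (simp add: lam_one_right)
  finally have "snd (lam \<alpha>\<^sub>1 \<beta>) = \<alpha>"
    using 2 by simp
  moreover have "\<alpha>\<^sub>1 \<in> carrier N"
    using lam_closed(2)[OF \<alpha> _ 1] \<beta> by simp
  ultimately show ?thesis ..
qed

abbreviation "S_neg \<equiv> S_act A N actN"
abbreviation "S_pos \<equiv> S_act A P actP"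
abbreviation "S_game \<equiv> comp_closure (S_neg \<union> S_pos)"

lemma act_NP_eq_PN:
  assumes "\<alpha> \<in> carrier N" "\<beta> \<in> carrier P"
  shows "\<exists>\<alpha>'\<in>carrier N. \<exists>\<beta>'\<in>carrier P. \<forall>a\<in>evs A. actN \<alpha> (actP \<beta> a) = actP \<beta>' (actN \<alpha>' a)"
proof -
  obtain \<beta>' \<alpha>' where l: "lam \<alpha> \<beta> = (\<beta>', \<alpha>')"
    by fastforce
  show ?thesis
    using lam_act_commute[OF assms l] lam_closed[OF assms l] by blast
qed

lemma act_PN_eq_NP:
  assumes \<alpha>: "\<alpha> \<in> carrier N" and \<beta>: "\<beta> \<in> carrier P"
  shows "\<exists>\<alpha>'\<in>carrier N. \<exists>\<beta>'\<in>carrier P. \<forall>a\<in>evs A. actP \<beta> (actN \<alpha> a) = actN \<alpha>' (actP \<beta>' a)"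
proof -
  obtain \<alpha>' \<beta>' where \<alpha>': "\<alpha>' \<in> carrier N" and \<beta>': "\<beta>' \<in> carrier P"
    and commute: "\<forall>a\<in>evs A. actN (inv\<^bsub>N\<^esub> \<alpha>) (actP (inv\<^bsub>P\<^esub> \<beta>) a) = actP \<beta>' (actN \<alpha>' a)"
    using act_NP_eq_PN[OF Neg.inv_closed[OF \<alpha>] Pos.inv_closed[OF \<beta>]] by blast
  have "actP \<beta> (actN \<alpha> a) = actN (inv\<^bsub>N\<^esub> \<alpha>') (actP (inv\<^bsub>P\<^esub> \<beta>') a)" if a: "a \<in> evs A" for a
  proof -
    let ?c = "actP \<beta> (actN \<alpha> a)"
    have c: "?c \<in> evs A"
      using a \<alpha> \<beta> by (simp add: Neg.act_closed Pos.act_closed)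
    have "a = actN (inv\<^bsub>N\<^esub> \<alpha>) (actP (inv\<^bsub>P\<^esub> \<beta>) ?c)"
      using a \<alpha> \<beta> by (simp add: Neg.act_closed Neg.act_inv_act Pos.act_inv_act)
    also have "\<dots> = actP \<beta>' (actN \<alpha>' ?c)"
      using commute c by blast
    finally have "actN (inv\<^bsub>N\<^esub> \<alpha>') (actP (inv\<^bsub>P\<^esub> \<beta>') a)
                = actN (inv\<^bsub>N\<^esub> \<alpha>') (actP (inv\<^bsub>P\<^esub> \<beta>') (actP \<beta>' (actN \<alpha>' ?c)))"
      by (rule arg_cong)
    also have "\<dots> = ?c"
      using c \<alpha>' \<beta>' by (simp add: Neg.act_closed Neg.act_inv_act Pos.act_inv_act)
    finally have "actN (inv\<^bsub>N\<^esub> \<alpha>') (actP (inv\<^bsub>P\<^esub> \<beta>') a) = ?c" .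
    then show ?thesis ..
  qed
  then show ?thesis
    using Neg.inv_closed[OF \<alpha>'] Pos.inv_closed[OF \<beta>'] by blast
qed

lemma act_PNPN_eq_PN:
  assumes \<alpha>\<^sub>1: "\<alpha>\<^sub>1 \<in> carrier N" and \<beta>\<^sub>1: "\<beta>\<^sub>1 \<in> carrier P"
    and \<alpha>\<^sub>2: "\<alpha>\<^sub>2 \<in> carrier N" and \<beta>\<^sub>2: "\<beta>\<^sub>2 \<in> carrier P"
  shows "\<exists>\<alpha>\<in>carrier N. \<exists>\<beta>\<in>carrier P. \<forall>a\<in>evs A.
           actP \<beta>\<^sub>2 (actN \<alpha>\<^sub>2 (actP \<beta>\<^sub>1 (actN \<alpha>\<^sub>1 a))) = actP \<beta> (actN \<alpha> a)"
proof -
  obtain \<alpha>' \<beta>' where \<alpha>': "\<alpha>' \<in> carrier N" and \<beta>': "\<beta>' \<in> carrier P"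
    and commute: "\<forall>a\<in>evs A. actN \<alpha>\<^sub>2 (actP \<beta>\<^sub>1 a) = actP \<beta>' (actN \<alpha>' a)"
    using act_NP_eq_PN[OF \<alpha>\<^sub>2 \<beta>\<^sub>1] by blast
  have "actP \<beta>\<^sub>2 (actN \<alpha>\<^sub>2 (actP \<beta>\<^sub>1 (actN \<alpha>\<^sub>1 a)))
        = actP (\<beta>\<^sub>2 \<otimes>\<^bsub>P\<^esub> \<beta>') (actN (\<alpha>' \<otimes>\<^bsub>N\<^esub> \<alpha>\<^sub>1) a)" if "a \<in> evs A" for a
    using that commute \<alpha>\<^sub>1 \<alpha>' \<beta>\<^sub>2 \<beta>' by (simp add: Neg.act_closed Neg.act_mult Pos.act_mult)
  then show ?thesis
    using Neg.m_closed[OF \<alpha>' \<alpha>\<^sub>1] Pos.m_closed[OF \<beta>\<^sub>2 \<beta>'] by blast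
qed

lemma graph_on_PN_in_S_game:
  assumes x: "conf A x" and \<alpha>: "\<alpha> \<in> carrier N" and \<beta>: "\<beta> \<in> carrier P"
  shows "graph_on (\<lambda>a. actP \<beta> (actN \<alpha> a)) x \<in> S_game"
proof -
  have "graph_on (actN \<alpha>) x \<in> S_game"
    using x \<alpha> unfolding S_act_def by (blast intro: comp_closure.base)
  moreover have "graph_on (actP \<beta>) (actN \<alpha> ` x) \<in> S_game"
    using Neg.conf_act_image[OF \<alpha> x] \<beta> unfolding S_act_def by (blast intro: comp_closure.base)
  ultimately have "graph_on (actN \<alpha>) x O graph_on (actP \<beta>) (actN \<alpha> ` x) \<in> S_game"
    by (rule comp_closure.comp) simp
  then show ?thesis
    unfolding graph_on_relcomp .
qed

lemma S_game_PN_form: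
  assumes "\<theta> \<in> S_game"
  obtains x \<alpha> \<beta> where "conf A x" "\<alpha> \<in> carrier N" "\<beta> \<in> carrier P"
    and "\<theta> = graph_on (\<lambda>a. actP \<beta> (actN \<alpha> a)) x"
proof -
  have "\<exists>x. \<exists>\<alpha>\<in>carrier N. \<exists>\<beta>\<in>carrier P. conf A x \<and> \<theta> = graph_on (\<lambda>a. actP \<beta> (actN \<alpha> a)) x"
    using assms
  proof induction
    case (base \<theta>)
    then consider g x where "conf A x" "g \<in> carrier N" "\<theta> = graph_on (actN g) x"
      | g x where "conf A x" "g \<in> carrier P" "\<theta> = graph_on (actP g) x"
      unfolding S_act_def by blast
    then show ?case
    proof cases
      case 1
      then have "\<theta> = graph_on (\<lambda>a. actP \<one>\<^bsub>P\<^esub> (actN g a)) x"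
        using conf_subset_evs[OF 1(1)]
        by (auto simp: graph_on_eq_iff Pos.act_one Neg.act_closed subsetD)
      then show ?thesis
        using 1 Pos.one_closed by blast
    next
      case 2
      then have "\<theta> = graph_on (\<lambda>a. actP g (actN \<one>\<^bsub>N\<^esub> a)) x"
        using conf_subset_evs[OF 2(1)] by (auto simp: graph_on_eq_iff Neg.act_one subsetD)
      then show ?thesis
        using 2 Neg.one_closed by blast
    qed
  next
    case (comp \<theta> \<theta>')
    obtain x \<alpha>\<^sub>1 \<beta>\<^sub>1 where x: "conf A x" and \<alpha>\<^sub>1: "\<alpha>\<^sub>1 \<in> carrier N" and \<beta>\<^sub>1: "\<beta>\<^sub>1 \<in> carrier P"
      and \<theta>: "\<theta> = graph_on (\<lambda>a. actP \<beta>\<^sub>1 (actN \<alpha>\<^sub>1 a)) x"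
      using comp.IH(1) by blast
    obtain x' \<alpha>\<^sub>2 \<beta>\<^sub>2 where \<alpha>\<^sub>2: "\<alpha>\<^sub>2 \<in> carrier N" and \<beta>\<^sub>2: "\<beta>\<^sub>2 \<in> carrier P"
      and \<theta>': "\<theta>' = graph_on (\<lambda>a. actP \<beta>\<^sub>2 (actN \<alpha>\<^sub>2 a)) x'"
      using comp.IH(2) by blast
    have x': "x' = (\<lambda>a. actP \<beta>\<^sub>1 (actN \<alpha>\<^sub>1 a)) ` x"
      using comp.hyps(3) unfolding \<theta> \<theta>' by simp
    obtain \<alpha> \<beta> where \<alpha>: "\<alpha> \<in> carrier N" and \<beta>: "\<beta> \<in> carrier P"
      and eq: "\<forall>a\<in>evs A. actP \<beta>\<^sub>2 (actN \<alpha>\<^sub>2 (actP \<beta>\<^sub>1 (actN \<alpha>\<^sub>1 a))) = actP \<beta> (actN \<alpha> a)"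
      using act_PNPN_eq_PN[OF \<alpha>\<^sub>1 \<beta>\<^sub>1 \<alpha>\<^sub>2 \<beta>\<^sub>2] by blast
    have "\<theta> O \<theta>' = graph_on (\<lambda>a. actP \<beta> (actN \<alpha> a)) x"
      unfolding \<theta> \<theta>' x' graph_on_relcomp graph_on_eq_iff using eq conf_subset_evs[OF x] by blast
    then show ?case
      using x \<alpha> \<beta> by blast
  qed
  then show ?thesis
    using that by blast
qed

lemma S_game_NP_form:
  assumes "\<theta> \<in> S_game"
  obtains x \<alpha> \<beta> where "conf A x" "\<alpha> \<in> carrier N" "\<beta> \<in> carrier P"
    and "\<theta> = graph_on (\<lambda>a. actN \<alpha> (actP \<beta> a)) x"
proof -
  obtain x \<alpha> \<beta> where x: "conf A x" and \<alpha>: "\<alpha> \<in> carrier N" and \<beta>: "\<beta> \<in> carrier P"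
    and \<theta>: "\<theta> = graph_on (\<lambda>a. actP \<beta> (actN \<alpha> a)) x"
    using S_game_PN_form[OF assms] by blast
  obtain \<alpha>' \<beta>' where "\<alpha>' \<in> carrier N" "\<beta>' \<in> carrier P"
    and commute: "\<forall>a\<in>evs A. actP \<beta> (actN \<alpha> a) = actN \<alpha>' (actP \<beta>' a)"
    using act_PN_eq_NP[OF \<alpha> \<beta>] by blast
  moreover have "\<theta> = graph_on (\<lambda>a. actN \<alpha>' (actP \<beta>' a)) x"
    unfolding \<theta> graph_on_eq_iff using commute conf_subset_evs[OF x] by blast
  ultimately show ?thesis
    using that x by blast
qed

lemma act_agree_fixes:
  assumes x: "conf A x" and \<alpha>: "\<alpha> \<in> carrier N" and \<beta>: "\<beta> \<in> carrier P"
    and agree: "\<forall>a\<in>x. actN \<alpha> a = actP \<beta> a"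
  shows "fixes_set (actN \<alpha>) x" "fixes_set (actP \<beta>) x"
proof -
  show "fixes_set (actN \<alpha>) x"
    using neg_pos_automorphism_agree_fixes[OF is_es_game Neg.Q_act[OF \<alpha>] Pos.Q_act[OF \<beta>] x agree] .
  then show "fixes_set (actP \<beta>) x"
    using agree by (simp add: fixes_set_def)
qed

lemma S_pos_Int_S_neg: "\<theta> \<in> S_pos \<inter> S_neg \<Longrightarrow> \<theta> = Id_on (Domain \<theta>)"
proof -
  assume "\<theta> \<in> S_pos \<inter> S_neg"
  then obtain x \<beta> x' \<alpha> where x: "conf A x" and \<beta>: "\<beta> \<in> carrier P" and \<alpha>: "\<alpha> \<in> carrier N"
    and \<theta>: "\<theta> = graph_on (actP \<beta>) x" "\<theta> = graph_on (actN \<alpha>) x'"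
    unfolding S_act_def by blast
  then have "graph_on (actN \<alpha>) x' = graph_on (actP \<beta>) x"
    by simp
  then have "x' = x" "\<forall>a\<in>x. actN \<alpha> a = actP \<beta> a"
    unfolding graph_on_eq_iff by auto
  then have "\<theta> = Id_on x"
    using act_agree_fixes(1)[OF x \<alpha> \<beta>] \<theta>(2) by (simp add: Id_on_eq_graph_on graph_on_eq_iff fixes_set_def)
  then show ?thesis
    by simp
qed

lemma S_pos_pos_extension:
  assumes "\<theta> \<in> S_pos" "\<theta>' \<in> S_game" "bsub_pos A \<theta> \<theta>'"
  shows "\<theta>' \<in> S_pos"
proof -
  obtain x \<beta> where x: "conf A x" and \<beta>: "\<beta> \<in> carrier P" and \<theta>: "\<theta> = graph_on (actP \<beta>) x"
    using assms(1) unfolding S_act_def by blast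
  obtain x' \<alpha>' \<beta>' where x': "conf A x'" and \<alpha>': "\<alpha>' \<in> carrier N" and \<beta>': "\<beta>' \<in> carrier P"
    and \<theta>': "\<theta>' = graph_on (\<lambda>a. actP \<beta>' (actN \<alpha>' a)) x'"
    using S_game_PN_form[OF assms(2)] by blast
  have ext: "pos_ext A x x'" and agree: "\<forall>a\<in>x. actP \<beta>' (actN \<alpha>' a) = actP \<beta> a"
    using assms(3) unfolding \<theta> \<theta>' bsub_pos_def bsub_graph_on_iff by simp_all
  have "actN \<alpha>' a = actP (inv\<^bsub>P\<^esub> \<beta>' \<otimes>\<^bsub>P\<^esub> \<beta>) a" if "a \<in> x" for a
    using agree that conf_subset_evs[OF x] \<alpha>' \<beta> \<beta>'
    by (metis Neg.act_closed Pos.act_inv_act Pos.act_mult Pos.inv_closed subsetD)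
  then have "fixes_set (actN \<alpha>') x"
    using act_agree_fixes(1)[OF x \<alpha>'] \<beta> \<beta>' by blast
  then have "fixes_set (actN \<alpha>') x'"
    using neg_automorphism_fixes_pos_ext[OF Neg.Q_act[OF \<alpha>'] x x' _ ext] by blast
  then have "\<theta>' = graph_on (actP \<beta>') x'"
    unfolding \<theta>' graph_on_eq_iff fixes_set_def by simp
  then show ?thesis
    using x' \<beta>' unfolding S_act_def by blast
qed

lemma S_neg_neg_extension:
  assumes "\<theta> \<in> S_neg" "\<theta>' \<in> S_game" "bsub_neg A \<theta> \<theta>'"
  shows "\<theta>' \<in> S_neg"
proof -
  obtain x \<alpha> where x: "conf A x" and \<alpha>: "\<alpha> \<in> carrier N" and \<theta>: "\<theta> = graph_on (actN \<alpha>) x"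
    using assms(1) unfolding S_act_def by blast
  obtain x' \<alpha>' \<beta>' where x': "conf A x'" and \<alpha>': "\<alpha>' \<in> carrier N" and \<beta>': "\<beta>' \<in> carrier P"
    and \<theta>': "\<theta>' = graph_on (\<lambda>a. actN \<alpha>' (actP \<beta>' a)) x'"
    using S_game_NP_form[OF assms(2)] by blast
  have ext: "neg_ext A x x'" and agree: "\<forall>a\<in>x. actN \<alpha>' (actP \<beta>' a) = actN \<alpha> a"
    using assms(3) unfolding \<theta> \<theta>' bsub_neg_def bsub_graph_on_iff by simp_all
  have "actN (inv\<^bsub>N\<^esub> \<alpha>' \<otimes>\<^bsub>N\<^esub> \<alpha>) a = actP \<beta>' a" if "a \<in> x" for a
    using agree that conf_subset_evs[OF x] \<alpha> \<alpha>' \<beta>'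
    by (metis Pos.act_closed Neg.act_inv_act Neg.act_mult Neg.inv_closed subsetD)
  then have "fixes_set (actP \<beta>') x"
    using act_agree_fixes(2)[OF x _ \<beta>'] \<alpha> \<alpha>' by blast
  then have "fixes_set (actP \<beta>') x'"
    using pos_automorphism_fixes_neg_ext[OF Pos.Q_act[OF \<beta>'] x x' _ ext] by blast
  then have "\<theta>' = graph_on (actN \<alpha>') x'"
    unfolding \<theta>' graph_on_eq_iff fixes_set_def by simp
  then show ?thesis
    using x' \<alpha>' unfolding S_act_def by blast
qed

theorem thin_cg_game: "thin_cg A S_game S_pos S_neg"
  unfolding thin_cg_def
  using is_es_game iso_family_comp_closure_Un[OF Neg.iso_family_S_act Pos.iso_family_S_act]
    Pos.iso_family_S_act Neg.iso_family_S_act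
    S_pos_Int_S_neg S_pos_pos_extension S_neg_neg_extension
  by (auto intro: comp_closure.base)

end

section \<open>Uniform strategies as \<open>\<sim>\<close>-strategies\<close>

locale uniform_strategy_game = game A N actN P actP lam
  for A :: "'a evstr" and N :: "'n monoid" and actN :: "'n \<Rightarrow> 'a \<Rightarrow> 'a"
    and P :: "'p monoid" and actP :: "'p \<Rightarrow> 'a \<Rightarrow> 'a" and lam :: "'n \<Rightarrow> 'p \<Rightarrow> 'p \<times> 'n" +
  fixes \<sigma> :: "'s evstr" and p :: "'s \<Rightarrow> 'a"
    and \<phi> :: "'n \<Rightarrow> 's \<Rightarrow> 's" and \<phi>b :: "'n \<Rightarrow> 's set \<Rightarrow> 'p"
  assumes uniform: "uniform_strategy A N actN P actP lam \<sigma> p \<phi> \<phi>b"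
begin

lemma strategy_p: "is_strategy \<sigma> A p"
  using uniform by (simp add: uniform_strategy_def)

lemma es_map_p: "es_map \<sigma> A p"
  using strategy_p by (simp add: is_strategy_def)

lemma conf_p_image: "conf \<sigma> x \<Longrightarrow> conf A (p ` x)"
  by (rule es_map_conf[OF es_map_p])

lemma p_in_evs: "conf \<sigma> x \<Longrightarrow> s \<in> x \<Longrightarrow> p s \<in> evs A"
  using conf_subset_evs[OF conf_p_image] by blast

lemma neg_receptive:
  "conf \<sigma> x \<Longrightarrow> conf A z \<Longrightarrow> neg_ext A (p ` x) z \<Longrightarrow> \<exists>!y. conf \<sigma> y \<and> x \<subseteq> y \<and> p ` y = z"
  using strategy_p unfolding is_strategy_def by blast

lemma neg_ext_eq_if_p_image_eq:
  assumes x: "conf \<sigma> x" and z: "conf \<sigma> z" and xz: "neg_ext \<sigma> x z"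
    and y: "conf \<sigma> y" "x \<subseteq> y" "p ` y = p ` z"
  shows "y = z"
proof -
  have unique: "\<exists>!y'. conf \<sigma> y' \<and> x \<subseteq> y' \<and> p ` y' = p ` z"
    using neg_receptive[OF x conf_p_image[OF z] es_map_neg_ext[OF es_map_p z xz]] .
  have "y = (THE y'. conf \<sigma> y' \<and> x \<subseteq> y' \<and> p ` y' = p ` z)"
    using the1_equality[OF unique] y by simp
  also have "\<dots> = z"
    using the1_equality[OF unique] z xz by (simp add: neg_ext_def)
  finally show ?thesis .
qed

lemma es_map_phi: "\<alpha> \<in> carrier N \<Longrightarrow> es_map \<sigma> \<sigma> (\<phi> \<alpha>)"
  using uniform by (simp add: uniform_strategy_def)

lemma conf_phi_image: "\<alpha> \<in> carrier N \<Longrightarrow> conf \<sigma> x \<Longrightarrow> conf \<sigma> (\<phi> \<alpha> ` x)"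
  by (rule es_map_conf[OF es_map_phi])

lemma phib_closed: "\<alpha> \<in> carrier N \<Longrightarrow> conf \<sigma> x \<Longrightarrow> \<phi>b \<alpha> x \<in> carrier P"
  using uniform by (simp add: uniform_strategy_def)

lemma act_phib_p_phi:
  "\<alpha> \<in> carrier N \<Longrightarrow> conf \<sigma> x \<Longrightarrow> s \<in> x \<Longrightarrow> actP (\<phi>b \<alpha> x) (p (\<phi> \<alpha> s)) = actN \<alpha> (p s)"
  using uniform by (simp add: uniform_strategy_def)

lemma p_phi:
  assumes \<alpha>: "\<alpha> \<in> carrier N" and x: "conf \<sigma> x" and s: "s \<in> x"
  shows "p (\<phi> \<alpha> s) = actP (inv\<^bsub>P\<^esub> (\<phi>b \<alpha> x)) (actN \<alpha> (p s))"
proof -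
  have "p (\<phi> \<alpha> s) \<in> evs A"
    using p_in_evs[OF conf_phi_image[OF \<alpha> x]] s by blast
  then show ?thesis
    using act_phib_p_phi[OF \<alpha> x s] phib_closed[OF \<alpha> x] by (metis Pos.act_inv_act)
qed

lemma phi_mult_image:
  assumes "conf \<sigma> x" "\<alpha> \<in> carrier N" "\<alpha>' \<in> carrier N" "lam \<alpha>' (\<phi>b \<alpha> x) = (\<gamma>, \<beta>)"
  shows "\<phi> (\<alpha>' \<otimes>\<^bsub>N\<^esub> \<alpha>) ` x = \<phi> \<beta> ` \<phi> \<alpha> ` x"
    and "\<phi>b (\<alpha>' \<otimes>\<^bsub>N\<^esub> \<alpha>) x = \<gamma> \<otimes>\<^bsub>P\<^esub> \<phi>b \<beta> (\<phi> \<alpha> ` x)"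
proof -
  have "\<forall>x. conf \<sigma> x \<longrightarrow> (\<forall>\<alpha>\<in>carrier N. \<forall>\<alpha>'\<in>carrier N.
          let y = \<phi> \<alpha> ` x; (\<gamma>, \<beta>) = lam \<alpha>' (\<phi>b \<alpha> x)
          in \<phi> (\<alpha>' \<otimes>\<^bsub>N\<^esub> \<alpha>) ` x = \<phi> \<beta> ` y \<and> \<phi>b (\<alpha>' \<otimes>\<^bsub>N\<^esub> \<alpha>) x = \<gamma> \<otimes>\<^bsub>P\<^esub> \<phi>b \<beta> y)"
    using uniform unfolding uniform_strategy_def by (elim conjE)
  then have "let y = \<phi> \<alpha> ` x; (\<gamma>, \<beta>) = lam \<alpha>' (\<phi>b \<alpha> x)
        in \<phi> (\<alpha>' \<otimes>\<^bsub>N\<^esub> \<alpha>) ` x = \<phi> \<beta> ` y \<and> \<phi>b (\<alpha>' \<otimes>\<^bsub>N\<^esub> \<alpha>) x = \<gamma> \<otimes>\<^bsub>P\<^esub> \<phi>b \<beta> y"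
    using assms(1-3) by blast
  then show "\<phi> (\<alpha>' \<otimes>\<^bsub>N\<^esub> \<alpha>) ` x = \<phi> \<beta> ` \<phi> \<alpha> ` x"
    and "\<phi>b (\<alpha>' \<otimes>\<^bsub>N\<^esub> \<alpha>) x = \<gamma> \<otimes>\<^bsub>P\<^esub> \<phi>b \<beta> (\<phi> \<alpha> ` x)"
    using assms(4) by (simp_all add: Let_def)
qed

lemma phi_mult_apply:
  assumes x: "conf \<sigma> x" and \<alpha>: "\<alpha> \<in> carrier N" and \<alpha>': "\<alpha>' \<in> carrier N" and s: "s \<in> x"
  shows "\<phi> (\<alpha>' \<otimes>\<^bsub>N\<^esub> \<alpha>) s = \<phi> (snd (lam \<alpha>' (\<phi>b \<alpha> x))) (\<phi> \<alpha> s)"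
proof -
  define b where "b = \<phi>b \<alpha> x"
  obtain \<gamma> \<beta> where lam: "lam \<alpha>' b = (\<gamma>, \<beta>)"
    by fastforce
  have b: "b \<in> carrier P"
    unfolding b_def using \<alpha> x by (rule phib_closed)
  have \<gamma>: "\<gamma> \<in> carrier P" and \<beta>: "\<beta> \<in> carrier N"
    using lam_closed[OF \<alpha>' b lam] by simp_all
  define y where "y = \<phi> \<alpha> ` x"
  define c where "c = \<phi>b \<beta> y"
  have y: "conf \<sigma> y" and z: "conf \<sigma> (\<phi> \<beta> ` y)" and c: "c \<in> carrier P"
    unfolding y_def c_def using conf_phi_image \<alpha> \<beta> x phib_closed by blast+
  have image: "\<phi> (\<alpha>' \<otimes>\<^bsub>N\<^esub> \<alpha>) ` x = \<phi> \<beta> ` y" and phib: "\<phi>b (\<alpha>' \<otimes>\<^bsub>N\<^esub> \<alpha>) x = \<gamma> \<otimes>\<^bsub>P\<^esub> c"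
    using phi_mult_image[OF x \<alpha> \<alpha>'] lam unfolding b_def y_def c_def by simp_all
  define t\<^sub>1 where "t\<^sub>1 = \<phi> (\<alpha>' \<otimes>\<^bsub>N\<^esub> \<alpha>) s"
  define t\<^sub>2 where "t\<^sub>2 = \<phi> \<beta> (\<phi> \<alpha> s)"
  have sy: "\<phi> \<alpha> s \<in> y" and t\<^sub>1: "t\<^sub>1 \<in> \<phi> \<beta> ` y" and t\<^sub>2: "t\<^sub>2 \<in> \<phi> \<beta> ` y"
    unfolding t\<^sub>1_def t\<^sub>2_def y_def using s image[symmetric] unfolding y_def by blast+
  have "actP \<gamma> (actP c (p t\<^sub>1)) = actN \<alpha>' (actN \<alpha> (p s))"
    using act_phib_p_phi[OF Neg.m_closed[OF \<alpha>' \<alpha>] x s] phib \<gamma> c \<alpha> \<alpha>'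
      p_in_evs[OF x s] p_in_evs[OF z t\<^sub>1]
    unfolding t\<^sub>1_def by (simp add: Pos.act_mult Neg.act_mult)
  also have "\<dots> = actN \<alpha>' (actP b (p (\<phi> \<alpha> s)))"
    using act_phib_p_phi[OF \<alpha> x s] unfolding b_def by simp
  also have "\<dots> = actP \<gamma> (actN \<beta> (p (\<phi> \<alpha> s)))"
    using lam_act_commute[OF \<alpha>' b lam p_in_evs[OF y sy]] .
  also have "\<dots> = actP \<gamma> (actP c (p t\<^sub>2))"
    using act_phib_p_phi[OF \<beta> y sy] unfolding t\<^sub>2_def c_def by simp
  finally have "p t\<^sub>1 = p t\<^sub>2"
    using p_in_evs[OF z t\<^sub>1] p_in_evs[OF z t\<^sub>2] \<gamma> c
    by (simp add: Pos.act_inject Pos.act_closed)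
  then have "t\<^sub>1 = t\<^sub>2"
    by (rule inj_onD[OF es_map_inj_on[OF es_map_p z] _ t\<^sub>1 t\<^sub>2])
  then show ?thesis
    using lam unfolding t\<^sub>1_def t\<^sub>2_def b_def by simp
qed

lemma es_sym_map_p: "es_sym_map \<sigma> (S_phi \<sigma> N \<phi>) A S_game p"
  unfolding es_sym_map_def
proof (intro conjI ballI)
  show "es_map \<sigma> A p"
    by (rule es_map_p)
  fix \<theta>
  assume "\<theta> \<in> S_phi \<sigma> N \<phi>"
  then obtain x \<alpha> where \<theta>: "\<theta> = graph_on (\<phi> \<alpha>) x" and x: "conf \<sigma> x" and \<alpha>: "\<alpha> \<in> carrier N"
    unfolding S_phi_def by blast
  let ?b = "\<phi>b \<alpha> x"
  have "map_prod p p ` \<theta> = graph_on (\<lambda>a. actP (inv\<^bsub>P\<^esub> ?b) (actN \<alpha> a)) (p ` x)"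
    unfolding \<theta> using p_phi[OF \<alpha> x] by (rule map_prod_graph_on)
  then show "map_prod p p ` \<theta> \<in> S_game"
    using graph_on_PN_in_S_game[OF conf_p_image[OF x] \<alpha>] phib_closed[OF \<alpha> x] by simp
qed

end

locale local_uniform_strategy_game = uniform_strategy_game +
  assumes locality: "\<And>x \<alpha>. conf \<sigma> x \<Longrightarrow> \<alpha> \<in> carrier N \<Longrightarrow> fixes_set (actN \<alpha>) (p ` x)
                    \<Longrightarrow> fixes_set (\<phi> \<alpha>) x"
begin

lemma phi_one:
  assumes "conf \<sigma> x" "s \<in> x"
  shows "\<phi> \<one>\<^bsub>N\<^esub> s = s"
proof -
  have "fixes_set (actN \<one>\<^bsub>N\<^esub>) (p ` x)"
    using conf_subset_evs[OF conf_p_image[OF assms(1)]] by (auto simp: fixes_set_def Neg.act_one)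
  then show ?thesis
    using locality[OF assms(1) Neg.one_closed] assms(2) by (simp add: fixes_set_def)
qed

lemma iso_family_S_phi: "iso_family \<sigma> (S_phi \<sigma> N \<phi>)"
  unfolding S_phi_def
proof (rule iso_family_graph_family[where g\<^sub>0 = "\<one>\<^bsub>N\<^esub>"])
  show "es_map \<sigma> \<sigma> (\<phi> \<alpha>)" if "\<alpha> \<in> carrier N" for \<alpha>
    using that by (rule es_map_phi)
  show "\<phi> \<one>\<^bsub>N\<^esub> s = s" if "conf \<sigma> x" "s \<in> x" for x s
    using that by (rule phi_one)
  show "\<exists>h\<in>carrier N. \<forall>s\<in>x. \<phi> \<alpha>' (\<phi> \<alpha> s) = \<phi> h s"
    if \<alpha>: "\<alpha> \<in> carrier N" and \<alpha>': "\<alpha>' \<in> carrier N" and x: "conf \<sigma> x" for \<alpha> \<alpha>' x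
  proof -
    obtain \<delta> where \<delta>: "\<delta> \<in> carrier N" and "snd (lam \<delta> (\<phi>b \<alpha> x)) = \<alpha>'"
      using lam_snd_surj[OF \<alpha>' phib_closed[OF \<alpha> x]] by blast
    then have "\<forall>s\<in>x. \<phi> \<alpha>' (\<phi> \<alpha> s) = \<phi> (\<delta> \<otimes>\<^bsub>N\<^esub> \<alpha>) s"
      using phi_mult_apply[OF x \<alpha> \<delta>] by simp
    then show ?thesis
      using Neg.m_closed[OF \<delta> \<alpha>] by blast
  qed
  show "\<exists>h\<in>carrier N. \<forall>s\<in>x. \<phi> h (\<phi> \<alpha> s) = s"
    if \<alpha>: "\<alpha> \<in> carrier N" and x: "conf \<sigma> x" for \<alpha> x
  proof -
    let ?h = "snd (lam (inv\<^bsub>N\<^esub> \<alpha>) (\<phi>b \<alpha> x))"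
    have "\<forall>s\<in>x. \<phi> ?h (\<phi> \<alpha> s) = s"
      using phi_mult_apply[OF x \<alpha> Neg.inv_closed[OF \<alpha>]] phi_one[OF x] \<alpha> by simp
    moreover have "?h \<in> carrier N"
      using lam_closed(2)[OF Neg.inv_closed[OF \<alpha>] phib_closed[OF \<alpha> x]] by (metis prod.collapse)
    ultimately show ?thesis ..
  qed
qed simp

lemma S_phi_thin:
  assumes x: "conf \<sigma> x" and "\<theta> \<in> S_phi \<sigma> N \<phi>" and ext: "bsub_pos \<sigma> (Id_on x) \<theta>"
  shows "\<theta> = Id_on (Domain \<theta>)"
proof -
  obtain x' \<alpha> where \<theta>: "\<theta> = graph_on (\<phi> \<alpha>) x'" and x': "conf \<sigma> x'" and \<alpha>: "\<alpha> \<in> carrier N"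
    using assms(2) unfolding S_phi_def by blast
  have "pos_ext \<sigma> x x'" and fix_x: "fixes_set (\<phi> \<alpha>) x"
    using ext unfolding \<theta> bsub_pos_def bsub_Id_on_graph_on_iff by simp_all
  then have sub: "x \<subseteq> x'" and ext_p: "pos_ext A (p ` x) (p ` x')"
    using es_map_pos_ext[OF es_map_p x'] unfolding pos_ext_def by blast+
  let ?b = "\<phi>b \<alpha> x'"
  have "actN \<alpha> (p s) = actP ?b (p s)" if "s \<in> x" for s
    using act_phib_p_phi[OF \<alpha> x' subsetD[OF sub that]] fix_x that unfolding fixes_set_def by simp
  then have "fixes_set (actN \<alpha>) (p ` x)"
    using act_agree_fixes(1)[OF conf_p_image[OF x] \<alpha> phib_closed[OF \<alpha> x']] by blast
  then have "fixes_set (actN \<alpha>) (p ` x')"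
    using neg_automorphism_fixes_pos_ext[OF Neg.Q_act[OF \<alpha>] conf_p_image[OF x] conf_p_image[OF x'] _ ext_p]
    by blast
  then have "fixes_set (\<phi> \<alpha>) x'"
    using locality[OF x' \<alpha>] by blast
  then show ?thesis
    unfolding \<theta> by (simp add: Id_on_eq_graph_on graph_on_eq_iff fixes_set_def)
qed

lemma p_phi_eq_act:
  assumes x: "conf \<sigma> x" and y: "conf \<sigma> y" and ext: "neg_ext \<sigma> x y"
    and \<alpha>: "\<alpha> \<in> carrier N" and fix_x: "fixes_set (actN \<alpha>) (p ` x)" and s: "s \<in> y"
  shows "p (\<phi> \<alpha> s) = actN \<alpha> (p s)"
proof -
  let ?b = "\<phi>b \<alpha> y"
  have fix_phi: "fixes_set (\<phi> \<alpha>) x"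
    using locality[OF x \<alpha> fix_x] .
  have sub: "x \<subseteq> y"
    using ext by (simp add: neg_ext_def)
  have "fixes_set (actP ?b) (p ` x)"
    using act_phib_p_phi[OF \<alpha> y] sub fix_phi fix_x unfolding fixes_set_def by fastforce
  moreover have "neg_ext \<sigma> x (\<phi> \<alpha> ` y)"
    using es_map_neg_ext[OF es_map_phi[OF \<alpha>] y ext] fixes_set_image_eq[OF fix_phi] by simp
  then have "neg_ext A (p ` x) (p ` \<phi> \<alpha> ` y)"
    using es_map_neg_ext[OF es_map_p conf_phi_image[OF \<alpha> y]] by blast
  ultimately have "fixes_set (actP ?b) (p ` \<phi> \<alpha> ` y)"
    using pos_automorphism_fixes_neg_ext[OF Pos.Q_act[OF phib_closed[OF \<alpha> y]] conf_p_image[OF x]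
        conf_p_image[OF conf_phi_image[OF \<alpha> y]]] by blast
  then show ?thesis
    using act_phib_p_phi[OF \<alpha> y s] s unfolding fixes_set_def by simp
qed

lemma S_phi_receptive:
  assumes x: "conf \<sigma> x" and y: "conf \<sigma> y" and z: "conf \<sigma> z"
    and xy: "neg_ext \<sigma> x y" and xz: "neg_ext \<sigma> x z"
    and \<theta>: "\<theta> \<in> S_game" "Domain \<theta> = p ` y" "Range \<theta> = p ` z" "bsub (Id_on (p ` x)) \<theta>"
  shows "\<exists>\<chi>\<in>S_phi \<sigma> N \<phi>. Domain \<chi> = y \<and> Range \<chi> = z \<and> bsub (Id_on x) \<chi> \<and> map_prod p p ` \<chi> = \<theta>"
proof -
  have "Id_on (p ` x) \<in> S_neg"
    using iso_family_Id_on[OF Neg.iso_family_S_act conf_p_image[OF x]] .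
  moreover have "bsub_neg A (Id_on (p ` x)) \<theta>"
    using \<theta>(2,4) es_map_neg_ext[OF es_map_p y xy] by (simp add: bsub_neg_def)
  ultimately have "\<theta> \<in> S_neg"
    using S_neg_neg_extension \<theta>(1) by blast
  then obtain \<alpha> where \<alpha>: "\<alpha> \<in> carrier N" and \<theta>_eq: "\<theta> = graph_on (actN \<alpha>) (p ` y)"
    using \<theta>(2) unfolding S_act_def by auto
  have fix_x: "fixes_set (actN \<alpha>) (p ` x)"
    using \<theta>(4) unfolding \<theta>_eq bsub_Id_on_graph_on_iff by simp
  have p_phi: "\<And>s. s \<in> y \<Longrightarrow> p (\<phi> \<alpha> s) = actN \<alpha> (p s)"
    using p_phi_eq_act[OF x y xy \<alpha> fix_x] .
  define \<chi> where "\<chi> = graph_on (\<phi> \<alpha>) y"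
  have map: "map_prod p p ` \<chi> = \<theta>"
    unfolding \<chi>_def \<theta>_eq using p_phi by (rule map_prod_graph_on)
  have fix_phi: "fixes_set (\<phi> \<alpha>) x"
    using locality[OF x \<alpha> fix_x] .
  have "p ` \<phi> \<alpha> ` y = actN \<alpha> ` p ` y"
    unfolding image_image using p_phi by (rule image_cong[OF refl])
  then have "p ` \<phi> \<alpha> ` y = p ` z"
    using \<theta>(3) unfolding \<theta>_eq by simp
  moreover have "x \<subseteq> \<phi> \<alpha> ` y"
    using fixes_set_image_eq[OF fix_phi] xy image_mono unfolding neg_ext_def by metis
  ultimately have "\<phi> \<alpha> ` y = z"
    using neg_ext_eq_if_p_image_eq[OF x z xz conf_phi_image[OF \<alpha> y]] by blast
  moreover have "bsub (Id_on x) \<chi>"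
    using xy fix_phi unfolding \<chi>_def bsub_Id_on_graph_on_iff neg_ext_def by simp
  moreover have "\<chi> \<in> S_phi \<sigma> N \<phi>"
    unfolding \<chi>_def S_phi_def using y \<alpha> by blast
  ultimately show ?thesis
    using map unfolding \<chi>_def by (intro bexI[of _ "graph_on (\<phi> \<alpha>) y"]) simp_all
qed

theorem sim_strategy_S_phi: "sim_strategy A S_game S_pos S_neg \<sigma> (S_phi \<sigma> N \<phi>) p"
  unfolding sim_strategy_def
  using thin_cg_game strategy_p iso_family_S_phi es_sym_map_p S_phi_thin S_phi_receptive
  by (auto simp: is_strategy_def)

end

theorem proposition6p5:
  fixes A :: "'a evstr" and N :: "'n monoid" and P :: "'p monoid"
    and actN :: "'n \<Rightarrow> 'a \<Rightarrow> 'a" and actP :: "'p \<Rightarrow> 'a \<Rightarrow> 'a"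
    and lam :: "'n \<Rightarrow> 'p \<Rightarrow> 'p \<times> 'n"
    and \<sigma> :: "'s evstr" and p :: "'s \<Rightarrow> 'a"
    and \<phi> :: "'n \<Rightarrow> 's \<Rightarrow> 's" and \<phi>b :: "'n \<Rightarrow> 's set \<Rightarrow> 'p"
  assumes "is_game A N actN P actP lam"
    and "uniform_strategy A N actN P actP lam \<sigma> p \<phi> \<phi>b"
    and "\<forall>x \<alpha>. conf \<sigma> x \<and> \<alpha> \<in> carrier N \<and> fixes_set (actN \<alpha>) (p ` x)
           \<longrightarrow> fixes_set (\<phi> \<alpha>) x"
  shows "sim_strategy A
           (comp_closure (S_act A N actN \<union> S_act A P actP))
           (S_act A P actP) (S_act A N actN)
           \<sigma> (S_phi \<sigma> N \<phi>) p"
proof -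
  interpret local_uniform_strategy_game A N actN P actP lam \<sigma> p \<phi> \<phi>b
    using assms by unfold_locales blast+
  show ?thesis
    by (rule sim_strategy_S_phi)
qed

end
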